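(* Let $f\in\mathbb{C}[\mathrm{GL}_n]$. Then the Ronkin function $R_f$ is (real-valued and) affine on every connected component of $\mathbb{R}^n\setminus\mathrm{s}\mathcal{A}(f)$. In particular, if $\mathbb{R}^n\setminus\mathrm{s}\mathcal{A}(f)\neq\emptyset$, then $R_f$ is not identically equal to $-\infty$.
   Context: $\mathbb{C}[\mathrm{GL}_n]$ is the ring of regular functions on $\mathrm{GL}_n(\mathbb{C})$. $\mathrm{s}\mathcal{A}(f)\subset\mathbb{R}^n$ is the set of vectors $(\ln\lambda_1,\dots,\ln\lambda_n)$ (in any order) where $\lambda_1,\dots,\lambda_n$ are the singular values of some $A\in\mathrm{GL}_n(\mathbb{C})$ with $f(A) = 0$. Let $\mu$ be the Haar probability measure on the unitary group $\mathrm{U}(n)$. The Ronkin function of $f$ is \[R_f(x) = \int_{\mathrm{U}(n)}\int_{\mathrm{U}(n)}\ln|f(U\exp(\mathrm{diag}(x))V^* )|\,d\mu(U)\,d\mu(V)\in\mathbb{R}\cup\{-\infty\},\quad x\in\mathbb{R}^n.\] *)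

theory Defs
  imports "HOL-Probability.Probability"
begin

section \<open>Matrices over C indexed by a finite type 'n (n = CARD('n))\<close>

definition cadj :: "complex^'n^'n \<Rightarrow> complex^'n^'n" where
  "cadj A = (\<chi> i j. cnj (A $ j $ i))"

definition unitary_group :: "(complex^'n^'n) set" where
  "unitary_group = {U. U ** cadj U = mat 1}"

definition exp_diag :: "real^'n \<Rightarrow> complex^'n^'n" where
  "exp_diag x = (\<chi> i j. if i = j then complex_of_real (exp (x $ i)) else 0)"

inductive poly_fun :: "(complex^'n^'n \<Rightarrow> complex) \<Rightarrow> bool" where
  const: "poly_fun (\<lambda>A. c)"
| coord: "poly_fun (\<lambda>A. A $ i $ j)"
| add: "poly_fun p \<Longrightarrow> poly_fun q \<Longrightarrow> poly_fun (\<lambda>A. p A + q A)"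
| mult: "poly_fun p \<Longrightarrow> poly_fun q \<Longrightarrow> poly_fun (\<lambda>A. p A * q A)"

text \<open>C[GL_n] = C[x_ij][1/det]: f is regular on GL_n iff on GL_n it equals p / det^k
  for a polynomial function p. Only the values of f on GL_n are relevant.\<close>
definition regular_GL :: "(complex^'n^'n \<Rightarrow> complex) \<Rightarrow> bool" where
  "regular_GL f \<longleftrightarrow> (\<exists>p k. poly_fun p \<and> (\<forall>A. det A \<noteq> 0 \<longrightarrow> f A = p A / det A ^ k))"

text \<open>x = (ln lambda_1, ..., ln lambda_n) (in some order) where lambda_i are the singular
  values of A, counted with multiplicity: the squares lambda_i^2 are the eigenvalues of
  A^* A with multiplicity, i.e. det(t I - A^* A) = prod_i (t - lambda_i^2).\<close>
definition log_singular_vector :: "complex^'n^'n \<Rightarrow> real^'n \<Rightarrow> bool" where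
  "log_singular_vector A x \<longleftrightarrow>
     (\<forall>t::complex. det (mat t - cadj A ** A) = (\<Prod>i\<in>UNIV. t - complex_of_real ((exp (x $ i))\<^sup>2)))"

definition sA :: "(complex^'n^'n \<Rightarrow> complex) \<Rightarrow> (real^'n) set" where
  "sA f = {x. \<exists>A. det A \<noteq> 0 \<and> f A = 0 \<and> log_singular_vector A x}"

text \<open>mu is the Haar probability measure of U(n), viewed as a Borel measure on the space of
  complex n x n matrices concentrated on U(n) and invariant under left translation by U(n)
  (such a measure is unique).\<close>
definition haar_unitary :: "(complex^'n^'n) measure \<Rightarrow> bool" where
  "haar_unitary \<mu> \<longleftrightarrow> prob_space \<mu> \<and> sets \<mu> = sets borel \<and>
     emeasure \<mu> unitary_group = 1 \<and>
     (\<forall>W\<in>unitary_group. distr \<mu> borel (\<lambda>A. W ** A) = \<mu>)"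

definition eln_abs :: "complex \<Rightarrow> ereal" where
  "eln_abs z = (if z = 0 then -\<infinity> else ereal (ln (cmod z)))"

text \<open>Lebesgue integral of an extended-real function (positive part minus negative part),
  taken as an iterated integral over U and V.\<close>
definition ronkin :: "(complex^'n^'n) measure \<Rightarrow> (complex^'n^'n \<Rightarrow> complex) \<Rightarrow> real^'n \<Rightarrow> ereal" where
  "ronkin \<mu> f x =
     (let g = (\<lambda>U V. eln_abs (f (U ** exp_diag x ** cadj V))) in
       enn2ereal (\<integral>\<^sup>+ U. \<integral>\<^sup>+ V. e2ennreal (max 0 (g U V)) \<partial>\<mu> \<partial>\<mu>)
       - enn2ereal (\<integral>\<^sup>+ U. \<integral>\<^sup>+ V. e2ennreal (max 0 (- g U V)) \<partial>\<mu> \<partial>\<mu>))"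

end

theory Submission
  imports Defs "HOL-Complex_Analysis.Cauchy_Integral_Formula"
begin

(* Write f = p / det^k on GL_n. Off the singular spine, p / det^k has no zero on
   U exp(diag x) V^* for unitary U, V, so the Ronkin function is the finite double integral R(x)
   of ln |p / det^k| over U(n) x U(n), and it is continuous there. Complexify x along a line,
   z = x + w a with w in C: for fixed U, V the integrand is ln of the modulus of a nonvanishing
   holomorphic function of w, so its mean over every small circle equals its value at the centre.
   The imaginary part of z is a diagonal unitary factor, absorbed into U by the invariance of the
   Haar measure, so after integrating over U and V the function s |-> R(x + s a) has the mean
   value property of w |-> R(x + Re w a). By the maximum principle it is affine on every segment
   inside the domain; hence R is locally affine and thus affine on each connected component. *)

section \<open>Diagonal and unitary matrices\<close>

definition diag_mat :: "('n::finite \<Rightarrow> 'a::zero) \<Rightarrow> 'a^'n^'n" where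
  "diag_mat d = (\<chi> i j. if i = j then d i else 0)"

lemma exp_diag_eq_diag_mat: "exp_diag x = diag_mat (\<lambda>i. complex_of_real (exp (x $ i)))"
  unfolding exp_diag_def diag_mat_def by simp

lemma mat_eq_diag_mat: "mat c = diag_mat (\<lambda>_. c)"
  by (simp add: mat_def diag_mat_def)

lemma diag_mat_mult: "diag_mat d ** diag_mat e = diag_mat (\<lambda>i. d i * e i :: 'a::semiring_1)"
  unfolding diag_mat_def matrix_matrix_mult_def
  by (simp add: vec_eq_iff if_distrib[where f="\<lambda>z. z * _"] sum.delta cong: if_cong)

lemma det_diag_mat: "det (diag_mat d) = prod d UNIV"
  by (subst det_diagonal) (auto simp: diag_mat_def)

lemma mat_mult_commute: "mat c ** A = A ** (mat c :: 'a::comm_semiring_1^'n^'n)"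
  unfolding mat_def matrix_matrix_mult_def
  by (simp add: vec_eq_iff if_distrib[where f="\<lambda>z. z * _"] if_distrib[where f="\<lambda>z. _ * z"]
      sum.delta sum.delta' mult.commute cong: if_cong)

lemma matrix_diff_ldistrib: "(A::'a::ring_1^'m^'n) ** (B - C) = A ** B - A ** C"
  unfolding matrix_matrix_mult_def by (simp add: vec_eq_iff algebra_simps sum_subtractf)

lemma matrix_diff_rdistrib: "((B - C)::'a::ring_1^'m^'n) ** A = B ** A - C ** A"
  unfolding matrix_matrix_mult_def by (simp add: vec_eq_iff algebra_simps sum_subtractf)

lemma cadj_diag_mat: "cadj (diag_mat d) = diag_mat (\<lambda>i. cnj (d i))"
  unfolding diag_mat_def cadj_def by (simp add: vec_eq_iff)

lemma cadj_matrix_mult: "cadj (A ** B) = cadj B ** cadj A"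
  unfolding cadj_def matrix_matrix_mult_def by (simp add: vec_eq_iff mult.commute)

lemma cadj_cadj [simp]: "cadj (cadj A) = A"
  unfolding cadj_def by (simp add: vec_eq_iff)

lemma unitary_group_iff: "U \<in> unitary_group \<longleftrightarrow> U ** cadj U = mat 1"
  by (simp add: unitary_group_def)

lemmas unitary_groupD = unitary_group_iff[THEN iffD1]

lemma unitary_cadj_mult_self:
  assumes "U \<in> unitary_group" shows "cadj U ** U = mat 1"
proof -
  have right: "U ** cadj U = mat 1" using assms by (rule unitary_groupD)
  then obtain B where left: "B ** U = mat 1" using matrix_left_right_inverse by blast
  have "B = B ** (U ** cadj U)" using right by (simp add: matrix_mul_rid)
  also have "\<dots> = cadj U" using left by (simp add: matrix_mul_assoc matrix_mul_lid)
  finally show ?thesis using left by simp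
qed

lemma unitary_group_mult: "U \<in> unitary_group \<Longrightarrow> V \<in> unitary_group \<Longrightarrow> U ** V \<in> unitary_group"
  unfolding unitary_group_iff cadj_matrix_mult by (metis matrix_mul_assoc matrix_mul_rid)

lemma unitary_group_cadj: "U \<in> unitary_group \<Longrightarrow> cadj U \<in> unitary_group"
  using unitary_cadj_mult_self by (fastforce simp: unitary_group_iff)

lemma unitary_group_mult_right_iff:
  assumes "W \<in> unitary_group" shows "U ** W \<in> unitary_group \<longleftrightarrow> U \<in> unitary_group"
proof
  assume "U ** W \<in> unitary_group"
  moreover have "U = (U ** W) ** cadj W"
    using unitary_groupD[OF assms] by (simp add: matrix_mul_assoc[symmetric] matrix_mul_rid)
  ultimately show "U \<in> unitary_group" by (metis unitary_group_mult unitary_group_cadj assms)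
qed (rule unitary_group_mult[OF _ assms])

lemma diag_mat_in_unitary_group: "(\<And>i. cmod (d i) = 1) \<Longrightarrow> diag_mat d \<in> unitary_group"
  unfolding unitary_group_iff cadj_diag_mat diag_mat_mult mat_eq_diag_mat
  by (simp add: complex_mult_cnj cmod_def power2_eq_square)

lemma det_unitary_nonzero: "U \<in> unitary_group \<Longrightarrow> det U \<noteq> 0"
  by (metis det_I det_mul mult_zero_left unitary_groupD zero_neq_one)

lemma log_singular_vector_unitary_exp_diag:
  assumes U: "U \<in> unitary_group" and V: "V \<in> unitary_group"
  shows "log_singular_vector (U ** exp_diag x ** cadj V) x"
  unfolding log_singular_vector_def
proof
  fix t :: complex
  let ?D = "exp_diag x" and ?A = "U ** exp_diag x ** cadj V"
  have VV: "V ** cadj V = mat 1" using V by (rule unitary_groupD)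
  have "cadj ?A ** ?A = V ** (?D ** (cadj U ** U) ** ?D) ** cadj V"
    by (simp add: cadj_matrix_mult exp_diag_eq_diag_mat cadj_diag_mat matrix_mul_assoc)
  also have "\<dots> = V ** (?D ** ?D) ** cadj V"
    using unitary_cadj_mult_self[OF U] by (simp add: matrix_mul_rid)
  finally have AA: "cadj ?A ** ?A = V ** (?D ** ?D) ** cadj V" .
  have "V ** mat t ** cadj V = mat t ** (V ** cadj V)"
    by (simp only: mat_mult_commute[of t V, symmetric] matrix_mul_assoc)
  hence "mat t = V ** mat t ** cadj V" by (simp add: VV matrix_mul_rid)
  hence "mat t - cadj ?A ** ?A = V ** (mat t - ?D ** ?D) ** cadj V"
    unfolding AA by (simp only: matrix_diff_ldistrib matrix_diff_rdistrib)
  hence "det (mat t - cadj ?A ** ?A) = det (mat t - ?D ** ?D) * det (V ** cadj V)"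
    by (simp add: det_mul)
  also have "\<dots> = det (mat t - ?D ** ?D)" using VV by simp
  also have "mat t - ?D ** ?D = diag_mat (\<lambda>i. t - complex_of_real ((exp (x $ i))\<^sup>2))"
    by (simp add: exp_diag_eq_diag_mat diag_mat_mult mat_eq_diag_mat)
      (simp add: diag_mat_def vec_eq_iff power2_eq_square)
  finally show "det (mat t - cadj ?A ** ?A) = (\<Prod>i\<in>UNIV. t - complex_of_real ((exp (x $ i))\<^sup>2))"
    by (simp add: det_diag_mat)
qed

lemma norm_unitary_entry_le_1:
  assumes "U \<in> unitary_group" shows "cmod (U $ i $ j) \<le> 1"
proof -
  have "(\<Sum>k\<in>UNIV. U $ i $ k * cnj (U $ i $ k)) = 1"
    using unitary_groupD[OF assms] by (simp add: vec_eq_iff matrix_matrix_mult_def cadj_def mat_def)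
  hence "(\<Sum>k\<in>UNIV. complex_of_real ((cmod (U $ i $ k))\<^sup>2)) = 1"
    by (simp add: complex_mult_cnj cmod_power2 del: of_real_power)
  hence rows: "(\<Sum>k\<in>UNIV. (cmod (U $ i $ k))\<^sup>2) = 1"
    by (metis of_real_eq_1_iff of_real_sum)
  have "(cmod (U $ i $ j))\<^sup>2 \<le> (\<Sum>k\<in>UNIV. (cmod (U $ i $ k))\<^sup>2)"
    by (rule member_le_sum) auto
  thus ?thesis using rows by (simp add: abs_square_le_1)
qed

lemma continuous_on_matrix_mult [continuous_intros]:
  fixes f g :: "_ \<Rightarrow> 'a::real_normed_field^'n^'n"
  assumes "continuous_on S f" "continuous_on S g"
  shows "continuous_on S (\<lambda>x. f x ** g x)"
  unfolding matrix_matrix_mult_def by (intro continuous_intros assms)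

lemma continuous_on_cadj [continuous_intros]:
  "continuous_on S f \<Longrightarrow> continuous_on S (\<lambda>x. cadj (f x))"
  unfolding cadj_def by (intro continuous_intros)

lemma closed_unitary_group: "closed unitary_group"
  unfolding unitary_group_def by (intro closed_Collect_eq continuous_intros)

lemma bounded_unitary_group: "bounded (unitary_group :: (complex^'n^'n) set)"
proof -
  have "norm U \<le> real CARD('n) * real CARD('n)" if "U \<in> unitary_group" for U :: "complex^'n^'n"
  proof -
    have "norm U \<le> (\<Sum>i\<in>UNIV. norm (U $ i))" by (simp add: norm_vec_def L2_set_le_sum)
    also have "\<dots> \<le> (\<Sum>i\<in>(UNIV::'n set). real CARD('n))"
    proof (rule sum_mono)
      fix i
      have "norm (U $ i) \<le> (\<Sum>j\<in>UNIV. norm (U $ i $ j))" by (simp add: norm_vec_def L2_set_le_sum)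
      also have "\<dots> \<le> (\<Sum>j\<in>(UNIV::'n set). 1)"
        by (rule sum_mono) (use norm_unitary_entry_le_1[OF that] in auto)
      finally show "norm (U $ i) \<le> real CARD('n)" by simp
    qed
    finally show ?thesis by simp
  qed
  thus ?thesis unfolding bounded_iff by blast
qed

lemma compact_unitary_group: "compact unitary_group"
  using bounded_unitary_group closed_unitary_group by (simp add: compact_eq_bounded_closed)

lemma borel_measurable_matrix_mult_left [measurable]:
  "(\<lambda>A :: complex^'n^'n. W ** A) \<in> borel_measurable borel" for W :: "complex^'n^'n"
  by (rule borel_measurable_continuous_onI[OF continuous_on_matrix_mult[OF continuous_on_const continuous_on_id]])

lemma borel_measurable_matrix_mult_right [measurable]:
  "(\<lambda>A :: complex^'n^'n. A ** W) \<in> borel_measurable borel" for W :: "complex^'n^'n"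
  by (rule borel_measurable_continuous_onI[OF continuous_on_matrix_mult[OF continuous_on_id continuous_on_const]])

lemma borel_measurable_matrix_mult_swap:
  "(\<lambda>q. snd q ** fst q) \<in> borel_measurable (borel :: ((complex^'n^'n) \<times> (complex^'n^'n)) measure)"
  by (intro borel_measurable_continuous_onI continuous_on_matrix_mult continuous_intros)

lemma borel_measurable_cadj [measurable]: "cadj \<in> borel_measurable borel"
  using borel_measurable_continuous_onI[OF continuous_on_cadj[OF continuous_on_id]] by simp

lemma unitary_group_in_borel [measurable]: "unitary_group \<in> sets borel"
  using closed_unitary_group by (rule borel_closed)

section \<open>The Haar measure on the unitary group\<close>

lemma sets_pair_borel:
  assumes "sets M = sets (borel :: ('a::second_countable_topology) measure)"
    and "sets N = sets (borel :: ('b::second_countable_topology) measure)"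
  shows "sets (M \<Otimes>\<^sub>M N) = sets (borel :: ('a \<times> 'b) measure)"
  using sets_pair_measure_cong[OF assms] by (metis borel_prod)

lemma e2ennreal_max_0_ereal: "e2ennreal (max 0 (ereal r)) = ennreal (max 0 r)"
  by (subst ereal_max_0) (rule e2ennreal_ereal)

locale unitary_haar =
  fixes \<mu> :: "(complex^'n^'n) measure"
  assumes haar: "haar_unitary \<mu>"
begin

sublocale prob_space \<mu>
  using haar by (simp add: haar_unitary_def)

lemma sets_eq_borel: "sets \<mu> = sets borel"
  using haar by (simp add: haar_unitary_def)

lemma space_eq_UNIV: "space \<mu> = UNIV"
  using sets_eq_imp_space_eq[OF sets_eq_borel] by simp

lemma measurable_eq_borel: "measurable \<mu> N = measurable borel N"
  by (rule measurable_cong_sets) (simp_all add: sets_eq_borel)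

lemma AE_unitary: "AE U in \<mu>. U \<in> unitary_group"
proof -
  have "prob unitary_group = 1" using haar by (simp add: haar_unitary_def measure_def)
  thus ?thesis by (rule AE_prob_1)
qed

lemma distr_mult_left: "W \<in> unitary_group \<Longrightarrow> distr \<mu> borel (\<lambda>A. W ** A) = \<mu>"
  using haar by (simp add: haar_unitary_def)

lemma nn_integral_mult_left:
  assumes W: "W \<in> unitary_group" and g: "g \<in> borel_measurable borel"
  shows "(\<integral>\<^sup>+ U. g (W ** U) \<partial>\<mu>) = integral\<^sup>N \<mu> g"
proof -
  have "integral\<^sup>N \<mu> g = integral\<^sup>N (distr \<mu> borel (\<lambda>A. W ** A)) g" using distr_mult_left[OF W] by simp
  also have "\<dots> = (\<integral>\<^sup>+ U. g (W ** U) \<partial>\<mu>)"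
    by (rule nn_integral_distr) (simp_all add: measurable_eq_borel g)
  finally show ?thesis by simp
qed

lemma prob_space_distr_cadj: "prob_space (distr \<mu> borel cadj)"
  by (rule prob_space_distr) (simp add: measurable_eq_borel)

lemma AE_distr_cadj_unitary: "AE V in distr \<mu> borel cadj. V \<in> unitary_group"
  by (subst AE_distr_iff) (simp_all add: measurable_eq_borel, use AE_unitary unitary_group_cadj in force)

text \<open>Inversion invariance: integrate \<open>indicator B (V ** U)\<close> over \<open>U \<sim> \<mu>\<close> and
  \<open>V \<sim> distr \<mu> borel cadj\<close> in both orders; left invariance of \<open>\<mu>\<close> evaluates either
  inner integral.\<close>
lemma distr_cadj: "distr \<mu> borel cadj = \<mu>"
proof -
  define \<nu> where "\<nu> = distr \<mu> borel cadj"
  interpret \<nu>: prob_space \<nu> unfolding \<nu>_def by (rule prob_space_distr_cadj)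
  interpret pair_sigma_finite \<mu> \<nu> by unfold_locales
  have AE_\<nu>: "AE V in \<nu>. V \<in> unitary_group" unfolding \<nu>_def by (rule AE_distr_cadj_unitary)
  show ?thesis unfolding \<nu>_def[symmetric]
  proof (rule measure_eqI)
    show "sets \<nu> = sets \<mu>" by (simp add: \<nu>_def sets_eq_borel)
    fix B assume "B \<in> sets \<nu>"
    hence B [measurable]: "B \<in> sets borel" by (simp add: \<nu>_def)
    have inner_\<mu>: "(\<integral>\<^sup>+ U. indicator B (V ** U) \<partial>\<mu>) = emeasure \<mu> B" if "V \<in> unitary_group" for V
      using nn_integral_mult_left[OF that, of "indicator B"] by (simp add: sets_eq_borel)
    have inner_\<nu>: "(\<integral>\<^sup>+ V. indicator B (V ** U) \<partial>\<nu>) = emeasure \<nu> B" if U: "U \<in> unitary_group" for U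
    proof -
      have "(\<integral>\<^sup>+ V. indicator B (V ** U) \<partial>\<nu>) = (\<integral>\<^sup>+ A. indicator (cadj -` B) (cadj U ** A) \<partial>\<mu>)"
        unfolding \<nu>_def
        by (subst nn_integral_distr) (simp_all add: measurable_eq_borel cadj_matrix_mult indicator_def)
      also have "\<dots> = (\<integral>\<^sup>+ A. indicator (cadj -` B) A \<partial>\<mu>)"
        by (rule nn_integral_mult_left[OF unitary_group_cadj[OF U]]) simp
      also have "\<dots> = emeasure \<nu> B"
        unfolding \<nu>_def using measurable_sets[OF borel_measurable_cadj B]
        by (subst emeasure_distr) (simp_all add: measurable_eq_borel space_eq_UNIV sets_eq_borel)
      finally show ?thesis .
    qed
    have "(\<lambda>q. indicator B (snd q ** fst q) :: ennreal) \<in> borel_measurable (\<mu> \<Otimes>\<^sub>M \<nu>)"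
      using measurable_compose[OF borel_measurable_matrix_mult_swap borel_measurable_indicator[OF B]]
      by (subst measurable_cong_sets[OF sets_pair_borel refl]) (simp_all add: sets_eq_borel \<nu>_def o_def)
    hence swap: "(\<integral>\<^sup>+ V. \<integral>\<^sup>+ U. indicator B (V ** U) \<partial>\<mu> \<partial>\<nu>) = (\<integral>\<^sup>+ U. \<integral>\<^sup>+ V. indicator B (V ** U) \<partial>\<nu> \<partial>\<mu>)"
      by (intro Fubini') (simp add: case_prod_beta)
    have "emeasure \<mu> B = (\<integral>\<^sup>+ V. emeasure \<mu> B \<partial>\<nu>)" by (simp add: \<nu>.emeasure_space_1)
    also have "\<dots> = (\<integral>\<^sup>+ V. \<integral>\<^sup>+ U. indicator B (V ** U) \<partial>\<mu> \<partial>\<nu>)"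
      by (rule nn_integral_cong_AE) (use AE_\<nu> inner_\<mu> in auto)
    also have "\<dots> = (\<integral>\<^sup>+ U. emeasure \<nu> B \<partial>\<mu>)"
      unfolding swap by (rule nn_integral_cong_AE) (use AE_unitary inner_\<nu> in auto)
    also have "\<dots> = emeasure \<nu> B" by (simp add: emeasure_space_1)
    finally show "emeasure \<nu> B = emeasure \<mu> B" by simp
  qed
qed

lemma distr_mult_right:
  assumes W: "W \<in> unitary_group" shows "distr \<mu> borel (\<lambda>A. A ** W) = \<mu>"
proof -
  have "distr \<mu> borel (\<lambda>A. A ** W) = distr (distr \<mu> borel cadj) borel (\<lambda>A. A ** W)"
    by (simp add: distr_cadj)
  also have "\<dots> = distr \<mu> borel (\<lambda>A. cadj (cadj W ** A))"
    by (subst distr_distr) (simp_all add: measurable_eq_borel o_def cadj_matrix_mult)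
  also have "\<dots> = distr (distr \<mu> borel (\<lambda>A. cadj W ** A)) borel cadj"
    by (subst distr_distr) (simp_all add: measurable_eq_borel o_def)
  also have "\<dots> = \<mu>" using distr_mult_left[OF unitary_group_cadj[OF W]] distr_cadj by simp
  finally show ?thesis .
qed

lemma integral_mult_right:
  fixes g :: "complex^'n^'n \<Rightarrow> real"
  assumes W: "W \<in> unitary_group" and g: "g \<in> borel_measurable borel"
  shows "(\<integral> U. g (U ** W) \<partial>\<mu>) = integral\<^sup>L \<mu> g"
proof -
  have "integral\<^sup>L \<mu> g = integral\<^sup>L (distr \<mu> borel (\<lambda>A. A ** W)) g" using distr_mult_right[OF W] by simp
  also have "\<dots> = (\<integral> U. g (U ** W) \<partial>\<mu>)"
    by (rule integral_distr) (simp_all add: measurable_eq_borel g)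
  finally show ?thesis by simp
qed

lemma integrable_bounded:
  fixes g :: "complex^'n^'n \<Rightarrow> real"
  assumes "g \<in> borel_measurable borel" "\<And>U. \<bar>g U\<bar> \<le> B"
  shows "integrable \<mu> g"
  by (rule integrable_const_bound[where B=B]) (use assms in \<open>simp_all add: measurable_eq_borel\<close>)

lemma abs_integral_le_bound:
  fixes g :: "complex^'n^'n \<Rightarrow> real"
  assumes "integrable \<mu> g" "\<And>U. \<bar>g U\<bar> \<le> B"
  shows "\<bar>integral\<^sup>L \<mu> g\<bar> \<le> B"
proof -
  have "\<bar>integral\<^sup>L \<mu> g\<bar> \<le> (\<integral>U. \<bar>g U\<bar> \<partial>\<mu>)" by (rule integral_abs_bound)
  also have "\<dots> \<le> (\<integral>U. B \<partial>\<mu>)" by (rule integral_mono) (use assms in auto)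
  also have "\<dots> = B" by (simp add: prob_space)
  finally show ?thesis .
qed

lemma borel_measurable_integral_param:
  fixes G :: "'a::second_countable_topology \<Rightarrow> complex^'n^'n \<Rightarrow> real"
  assumes "(\<lambda>q. G (fst q) (snd q)) \<in> borel_measurable borel"
  shows "(\<lambda>x. \<integral>V. G x V \<partial>\<mu>) \<in> borel_measurable borel"
proof -
  have "(\<lambda>(x, y). G x y) \<in> borel_measurable (borel \<Otimes>\<^sub>M \<mu>)"
    using assms by (subst measurable_cong_sets[OF sets_pair_borel[OF refl sets_eq_borel] refl])
      (simp add: case_prod_beta)
  thus ?thesis by (rule borel_measurable_lebesgue_integral)
qed

lemma integral_lborel_swap:
  fixes G :: "complex^'n^'n \<Rightarrow> real \<Rightarrow> real"
  assumes m: "(\<lambda>q. G (fst q) (snd q)) \<in> borel_measurable borel"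
    and b: "\<And>U t. \<bar>G U t\<bar> \<le> B * indicator {0..1} t"
  shows "(\<integral>U. (\<integral>t. G U t \<partial>lborel) \<partial>\<mu>) = (\<integral>t. (\<integral>U. G U t \<partial>\<mu>) \<partial>lborel)"
proof -
  interpret pair_sigma_finite \<mu> lborel by unfold_locales
  define S where "S = (UNIV :: (complex^'n^'n) set) \<times> {0..1::real}"
  have S: "S \<in> sets (\<mu> \<Otimes>\<^sub>M lborel)"
    unfolding S_def by (rule pair_measureI) (simp_all add: sets_eq_borel)
  have "emeasure (\<mu> \<Otimes>\<^sub>M lborel) S = emeasure \<mu> UNIV * emeasure lborel {0..1::real}"
    unfolding S_def by (rule lborel.emeasure_pair_measure_Times) (simp_all add: sets_eq_borel)
  also have "\<dots> = 1" using emeasure_space_1 by (simp add: space_eq_UNIV)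
  finally have dominating: "integrable (\<mu> \<Otimes>\<^sub>M lborel) (\<lambda>z. B * indicator S z)"
    using S by (intro integrable_mult_right integrable_real_indicator) simp_all
  have "(\<lambda>(x, y). G x y) \<in> borel_measurable (\<mu> \<Otimes>\<^sub>M lborel)"
    using m by (subst measurable_cong_sets[OF sets_pair_borel[OF sets_eq_borel sets_lborel] refl])
      (simp add: case_prod_beta)
  moreover have "norm ((\<lambda>(x, y). G x y) z) \<le> norm (B * indicator S z)" for z
  proof (cases z)
    case (Pair U t)
    have "B \<ge> 0" using b[of undefined 0] by simp
    thus ?thesis using b[of U t] by (simp add: Pair S_def indicator_def)
  qed
  ultimately have "integrable (\<mu> \<Otimes>\<^sub>M lborel) (\<lambda>(x, y). G x y)"
    by (intro Bochner_Integration.integrable_bound[OF dominating] AE_I2)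
  from Fubini_integral[OF this] show ?thesis by simp
qed

definition double_integral :: "(complex^'n^'n \<Rightarrow> complex^'n^'n \<Rightarrow> real) \<Rightarrow> real" where
  "double_integral G = (\<integral>U. (\<integral>V. G U V \<partial>\<mu>) \<partial>\<mu>)"

context
  fixes G :: "complex^'n^'n \<Rightarrow> complex^'n^'n \<Rightarrow> real" and B :: real
  assumes measurable: "(\<lambda>q. G (fst q) (snd q)) \<in> borel_measurable borel"
    and bounded: "\<And>U V. \<bar>G U V\<bar> \<le> B"
begin

lemma integrable_inner: "integrable \<mu> (G U)"
proof (rule integrable_bounded[OF _ bounded])
  have "(\<lambda>V. (U, V)) \<in> borel_measurable borel"
    by (intro borel_measurable_continuous_onI continuous_intros)
  from measurable_compose[OF this measurable] show "G U \<in> borel_measurable borel" by simp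
qed

lemma abs_integral_inner_le: "\<bar>\<integral>V. G U V \<partial>\<mu>\<bar> \<le> B"
  by (rule abs_integral_le_bound[OF integrable_inner bounded])

lemma integrable_outer: "integrable \<mu> (\<lambda>U. \<integral>V. G U V \<partial>\<mu>)"
  by (rule integrable_bounded[OF borel_measurable_integral_param[OF measurable] abs_integral_inner_le])

lemma abs_double_integral_le: "\<bar>double_integral G\<bar> \<le> B"
  unfolding double_integral_def by (rule abs_integral_le_bound[OF integrable_outer abs_integral_inner_le])

lemma nn_integral_double:
  assumes "\<And>U V. G U V \<ge> 0"
  shows "(\<integral>\<^sup>+U. (\<integral>\<^sup>+V. ennreal (G U V) \<partial>\<mu>) \<partial>\<mu>) = ennreal (double_integral G)"
proof -
  have "(\<integral>\<^sup>+U. (\<integral>\<^sup>+V. ennreal (G U V) \<partial>\<mu>) \<partial>\<mu>) = (\<integral>\<^sup>+U. ennreal (\<integral>V. G U V \<partial>\<mu>) \<partial>\<mu>)"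
    by (intro nn_integral_cong nn_integral_eq_integral) (use integrable_inner assms in auto)
  also have "\<dots> = ennreal (double_integral G)"
    unfolding double_integral_def
    by (rule nn_integral_eq_integral) (use integrable_outer assms in \<open>auto intro: integral_nonneg_AE\<close>)
  finally show ?thesis .
qed

end

lemma double_integral_diff:
  assumes "(\<lambda>q. G (fst q) (snd q)) \<in> borel_measurable borel" "\<And>U V. \<bar>G U V\<bar> \<le> B"
    and "(\<lambda>q. H (fst q) (snd q)) \<in> borel_measurable borel" "\<And>U V. \<bar>H U V\<bar> \<le> C"
  shows "double_integral (\<lambda>U V. G U V - H U V) = double_integral G - double_integral H"
  unfolding double_integral_def
  using integrable_inner[OF assms(1,2)] integrable_inner[OF assms(3,4)]
    integrable_outer[OF assms(1,2)] integrable_outer[OF assms(3,4)]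
  by simp

lemma double_integral_lborel_swap:
  fixes G :: "complex^'n^'n \<Rightarrow> complex^'n^'n \<Rightarrow> real \<Rightarrow> real"
  assumes m: "(\<lambda>q. G (fst q) (fst (snd q)) (snd (snd q))) \<in> borel_measurable borel"
    and b: "\<And>U V t. \<bar>G U V t\<bar> \<le> B * indicator {0..1} t"
  shows "double_integral (\<lambda>U V. \<integral>t. G U V t \<partial>lborel) = (\<integral>t. double_integral (\<lambda>U V. G U V t) \<partial>lborel)"
proof -
  have comp: "(\<lambda>y. G (f y) (g y) (h y)) \<in> borel_measurable borel"
    if "continuous_on UNIV f" "continuous_on UNIV g" "continuous_on UNIV h"
    for f g h :: "'a::{second_countable_topology, t2_space} \<Rightarrow> _"
  proof -
    have "(\<lambda>y. (f y, g y, h y)) \<in> borel_measurable borel"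
      by (intro borel_measurable_continuous_onI continuous_intros that)
    from measurable_compose[OF this m] show ?thesis by simp
  qed
  have inner_swap: "(\<integral>V. (\<integral>t. G U V t \<partial>lborel) \<partial>\<mu>) = (\<integral>t. (\<integral>V. G U V t \<partial>\<mu>) \<partial>lborel)" for U
    by (rule integral_lborel_swap[OF comp b]) (intro continuous_intros)+
  have bound_U: "\<bar>\<integral>V. G U V t \<partial>\<mu>\<bar> \<le> B * indicator {0..1} t" for U t
    by (rule abs_integral_le_bound[OF integrable_bounded[OF comp b] b]) (intro continuous_intros)+
  have "(\<lambda>y. \<integral>V. G (fst y) V (snd y) \<partial>\<mu>) \<in> borel_measurable borel"
    by (rule borel_measurable_integral_param[where G="\<lambda>y V. G (fst y) V (snd y)", OF comp])
      (intro continuous_intros)+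
  hence outer_swap: "(\<integral>U. (\<integral>t. (\<integral>V. G U V t \<partial>\<mu>) \<partial>lborel) \<partial>\<mu>)
      = (\<integral>t. (\<integral>U. (\<integral>V. G U V t \<partial>\<mu>) \<partial>\<mu>) \<partial>lborel)"
    by (intro integral_lborel_swap[OF _ bound_U]) simp
  show ?thesis unfolding double_integral_def inner_swap outer_swap ..
qed

lemma nn_integral_max_0_eq_double_integral:
  fixes g :: "complex^'n^'n \<Rightarrow> complex^'n^'n \<Rightarrow> ereal"
  assumes measurable: "(\<lambda>q. G (fst q) (snd q)) \<in> borel_measurable borel"
    and bounded: "\<And>U V. \<bar>G U V\<bar> \<le> B"
    and eq: "\<And>U V. U \<in> unitary_group \<Longrightarrow> V \<in> unitary_group \<Longrightarrow> g U V = ereal (G U V)"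
  shows "(\<integral>\<^sup>+U. \<integral>\<^sup>+V. e2ennreal (max 0 (g U V)) \<partial>\<mu> \<partial>\<mu>) = ennreal (double_integral (\<lambda>U V. max 0 (G U V)))"
proof -
  have inner: "(\<integral>\<^sup>+V. e2ennreal (max 0 (g U V)) \<partial>\<mu>) = (\<integral>\<^sup>+V. ennreal (max 0 (G U V)) \<partial>\<mu>)"
    if "U \<in> unitary_group" for U
  proof (rule nn_integral_cong_AE)
    show "AE V in \<mu>. e2ennreal (max 0 (g U V)) = ennreal (max 0 (G U V))"
      using AE_unitary by eventually_elim (simp add: eq[OF that] e2ennreal_max_0_ereal)
  qed
  have "(\<integral>\<^sup>+U. \<integral>\<^sup>+V. e2ennreal (max 0 (g U V)) \<partial>\<mu> \<partial>\<mu>) = (\<integral>\<^sup>+U. \<integral>\<^sup>+V. ennreal (max 0 (G U V)) \<partial>\<mu> \<partial>\<mu>)"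
    by (rule nn_integral_cong_AE) (use AE_unitary in eventually_elim, simp add: inner)
  also have "\<dots> = ennreal (double_integral (\<lambda>U V. max 0 (G U V)))"
  proof (rule nn_integral_double)
    show "(\<lambda>q. max 0 (G (fst q) (snd q))) \<in> borel_measurable borel"
      using measurable by (intro borel_measurable_max) simp_all
    show "\<bar>max 0 (G U V)\<bar> \<le> B" for U V using bounded[of U V] by auto
  qed simp
  finally show ?thesis .
qed

lemma ereal_double_integral:
  fixes g :: "complex^'n^'n \<Rightarrow> complex^'n^'n \<Rightarrow> ereal"
  assumes measurable: "(\<lambda>q. G (fst q) (snd q)) \<in> borel_measurable borel"
    and bounded: "\<And>U V. \<bar>G U V\<bar> \<le> B"
    and eq: "\<And>U V. U \<in> unitary_group \<Longrightarrow> V \<in> unitary_group \<Longrightarrow> g U V = ereal (G U V)"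
  shows "enn2ereal (\<integral>\<^sup>+U. \<integral>\<^sup>+V. e2ennreal (max 0 (g U V)) \<partial>\<mu> \<partial>\<mu>)
       - enn2ereal (\<integral>\<^sup>+U. \<integral>\<^sup>+V. e2ennreal (max 0 (- g U V)) \<partial>\<mu> \<partial>\<mu>) = ereal (double_integral G)"
proof -
  have measurable_parts: "(\<lambda>q. max 0 (G (fst q) (snd q))) \<in> borel_measurable borel"
      "(\<lambda>q. max 0 (- G (fst q) (snd q))) \<in> borel_measurable borel"
    using measurable by (auto intro!: borel_measurable_max borel_measurable_uminus)
  have bounded_parts: "\<bar>max 0 (G U V)\<bar> \<le> B" "\<bar>max 0 (- G U V)\<bar> \<le> B" for U V
    using bounded[of U V] by auto
  have "double_integral (\<lambda>U V. max 0 (G U V)) - double_integral (\<lambda>U V. max 0 (- G U V))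
      = double_integral (\<lambda>U V. max 0 (G U V) - max 0 (- G U V))"
    by (rule double_integral_diff[OF measurable_parts(1) bounded_parts(1) measurable_parts(2)
          bounded_parts(2), symmetric])
  also have "(\<lambda>U V. max 0 (G U V) - max 0 (- G U V)) = G" by (auto simp: fun_eq_iff max_def)
  finally have diff: "double_integral (\<lambda>U V. max 0 (G U V)) - double_integral (\<lambda>U V. max 0 (- G U V))
      = double_integral G" .
  have "double_integral (\<lambda>U V. max 0 (G U V)) \<ge> 0" "double_integral (\<lambda>U V. max 0 (- G U V)) \<ge> 0"
    unfolding double_integral_def by (auto intro!: integral_nonneg_AE AE_I2)
  with diff show ?thesis
    using nn_integral_max_0_eq_double_integral[OF measurable bounded eq]
      nn_integral_max_0_eq_double_integral[of "\<lambda>U V. - G U V" B "\<lambda>U V. - g U V"] measurable bounded eq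
    by simp
qed

end

section \<open>Mean values over circles\<close>

lemma has_integral_ln_norm_circlepath:
  assumes hol: "P holomorphic_on ball 0 \<rho>" and nz: "\<And>w. w \<in> ball 0 \<rho> \<Longrightarrow> P w \<noteq> 0"
    and r: "0 < r" "r < \<rho>"
  shows "((\<lambda>t. ln (cmod (P (circlepath 0 r t)))) has_integral ln (cmod (P 0))) {0..1}"
proof -
  have "0 \<in> ball (0::complex) \<rho>" using r by simp
  then obtain g where g: "g holomorphic_on ball 0 \<rho>" and eg: "\<And>x. x \<in> ball 0 \<rho> \<Longrightarrow> exp (g x) = P x"
    using holomorphic_logarithm_exists[OF convex_ball open_ball hol nz] by metis
  have gc: "g holomorphic_on cball 0 r"
    using g by (rule holomorphic_on_subset) (use r in auto)
  have ci: "((\<lambda>u. g u / (u - 0)) has_contour_integral 2 * complex_of_real pi * \<i> * g 0) (circlepath 0 r)"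
    by (rule Cauchy_integral_circlepath_simple[OF gc]) (use r in simp)
  hence "((\<lambda>x. g (circlepath 0 r x) / (circlepath 0 r x - 0) * vector_derivative (circlepath 0 r) (at x within {0..1}))
          has_integral 2 * complex_of_real pi * \<i> * g 0) {0..1}"
    by (simp add: has_contour_integral_def)
  hence "((\<lambda>x. 2 * complex_of_real pi * \<i> * g (circlepath 0 r x)) has_integral 2 * complex_of_real pi * \<i> * g 0) {0..1}"
  proof (rule has_integral_spike_finite[OF finite.emptyI, rotated])
    fix x :: real assume "x \<in> {0..1} - {}"
    hence x: "0 \<le> x" "x \<le> 1" by auto
    show "2 * complex_of_real pi * \<i> * g (circlepath 0 r x) = g (circlepath 0 r x) / (circlepath 0 r x - 0) * vector_derivative (circlepath 0 r) (at x within {0..1})"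
      using r by (simp only: vector_derivative_circlepath01[OF x]) (simp add: circlepath field_simps)
  qed
  hence "((\<lambda>x. (1 / (2 * complex_of_real pi * \<i>)) * (2 * complex_of_real pi * \<i> * g (circlepath 0 r x))) has_integral
     (1 / (2 * complex_of_real pi * \<i>)) * (2 * complex_of_real pi * \<i> * g 0)) {0..1}"
    by (rule has_integral_mult_right)
  hence "((\<lambda>x. g (circlepath 0 r x)) has_integral g 0) {0..1}"
    by simp
  hence "((Re \<circ> (\<lambda>x. g (circlepath 0 r x))) has_integral Re (g 0)) {0..1}"
    by (rule has_integral_linear) (rule bounded_linear_Re)
  moreover have "Re (g w) = ln (cmod (P w))" if "w \<in> ball 0 \<rho>" for w
    using eg[OF that] by (metis ln_exp norm_exp_eq_Re)
  moreover have "circlepath 0 r x \<in> ball 0 \<rho>" for x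
    using r by (simp add: circlepath norm_mult)
  ultimately show ?thesis using \<open>0 \<in> ball 0 \<rho>\<close> by (simp add: o_def)
qed

text \<open>The mean value property at \<open>s\<close> of \<open>w \<mapsto> g (Re w)\<close> on small circles in \<open>\<complex>\<close>,
  parametrised by \<open>t \<in> {0..1}\<close>.\<close>
definition mean_value_at :: "(real \<Rightarrow> real) \<Rightarrow> real \<Rightarrow> bool" where
  "mean_value_at g s \<longleftrightarrow> (\<exists>r0>0. \<forall>r. 0 < r \<and> r < r0 \<longrightarrow>
     ((\<lambda>t. g (s + r * cos (2 * pi * t))) has_integral g s) {0..1})"

lemma mean_value_at_maximum_left:
  fixes g :: "real \<Rightarrow> real"
  assumes cont: "continuous_on {m - r..m + r} g" and r: "r \<ge> 0"
    and max: "\<And>y. y \<in> {m - r..m + r} \<Longrightarrow> g y \<le> g m"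
    and mean: "((\<lambda>t. g (m + r * cos (2 * pi * t))) has_integral g m) {0..1}"
  shows "g (m - r) = g m"
proof -
  have on_circle: "m + r * cos (2 * pi * t) \<in> {m - r..m + r}" for t
    using r by (auto simp: mult_left_le mult_right_le_one_le abs_le_iff
        intro: order.trans[OF _ mult_left_mono[OF cos_ge_minus_one]] order.trans[OF mult_left_mono[OF cos_le_one]])
  have "((\<lambda>t. g m - g (m + r * cos (2 * pi * t))) has_integral 0) (cbox 0 1)"
    using has_integral_diff[OF has_integral_const_real[of "g m" 0 1] mean] by simp
  moreover have "continuous_on (cbox 0 1) (\<lambda>t. g m - g (m + r * cos (2 * pi * t)))"
    by (intro continuous_intros continuous_on_compose2[OF cont]) (use on_circle in auto)
  ultimately have "g m - g (m + r * cos (2 * pi * (1/2))) = 0"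
    by (intro has_integral_0_cbox_imp_0) (use max on_circle in auto)
  thus ?thesis by simp
qed

lemma mean_value_at_max_principle:
  fixes g :: "real \<Rightarrow> real"
  assumes cont: "continuous_on {\<alpha>..\<beta>} g" and "g \<alpha> \<le> 0" and "g \<beta> \<le> 0"
    and mean: "\<And>s. s \<in> {\<alpha><..<\<beta>} \<Longrightarrow> mean_value_at g s"
    and s: "s \<in> {\<alpha>..\<beta>}"
  shows "g s \<le> 0"
proof (rule ccontr)
  assume "\<not> g s \<le> 0"
  obtain m0 where "m0 \<in> {\<alpha>..\<beta>}" and max: "\<And>y. y \<in> {\<alpha>..\<beta>} \<Longrightarrow> g y \<le> g m0"
    using continuous_attains_sup[OF compact_Icc _ cont] s by fastforce
  define K where "K = {y \<in> {\<alpha>..\<beta>}. g y = g m0}"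
  have "closed K"
    unfolding K_def using continuous_closed_preimage_constant[OF cont closed_atLeastAtMost] by simp
  moreover have "bdd_below K" "K \<noteq> {}" using \<open>m0 \<in> {\<alpha>..\<beta>}\<close> by (auto simp: K_def bdd_below_def)
  ultimately have "Inf K \<in> K" by (intro closed_contains_Inf)
  \<comment> \<open>The leftmost maximiser is interior, and its mean value property produces a maximiser
    further left.\<close>
  define m where "m = Inf K"
  have "g m0 > 0" using max[OF s] \<open>\<not> g s \<le> 0\<close> by simp
  hence m: "m \<in> {\<alpha><..<\<beta>}" "g m = g m0"
    using \<open>Inf K \<in> K\<close> assms(2,3) by (auto simp: m_def K_def less_le)
  obtain r0 where "r0 > 0" and r0: "\<And>r. 0 < r \<Longrightarrow> r < r0 \<Longrightarrow>
      ((\<lambda>t. g (m + r * cos (2 * pi * t))) has_integral g m) {0..1}"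
    using mean[OF m(1)] unfolding mean_value_at_def by blast
  define r where "r = min r0 (min (m - \<alpha>) (\<beta> - m)) / 2"
  have r: "0 < r" "r < r0" "r \<le> m - \<alpha>" "r \<le> \<beta> - m" using \<open>r0 > 0\<close> m by (auto simp: r_def)
  have "g (m - r) = g m"
    using r by (intro mean_value_at_maximum_left r0 continuous_on_subset[OF cont])
      (auto simp: m(2) intro: max)
  hence "m - r \<in> K" using r m by (auto simp: K_def)
  hence "m \<le> m - r" unfolding m_def using \<open>bdd_below K\<close> by (rule cInf_lower)
  thus False using r by simp
qed

lemma has_integral_cos_2pi: "((\<lambda>t. cos (2 * pi * t)) has_integral 0) {0..1::real}"
proof -
  have "((\<lambda>t. cos (2 * pi * t)) has_integral (sin (2 * pi * 1) / (2 * pi) - sin (2 * pi * 0) / (2 * pi))) {0..1::real}"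
    by (rule fundamental_theorem_of_calculus)
      (auto intro!: derivative_eq_intros simp: has_real_derivative_iff_has_vector_derivative[symmetric])
  thus ?thesis by simp
qed

lemma mean_value_at_imp_affine:
  fixes g :: "real \<Rightarrow> real"
  assumes cont: "continuous_on {\<alpha>..\<beta>} g" and "\<alpha> < \<beta>"
    and mean: "\<And>s. s \<in> {\<alpha><..<\<beta>} \<Longrightarrow> mean_value_at g s"
    and s: "s \<in> {\<alpha>..\<beta>}"
  shows "g s = g \<alpha> + (s - \<alpha>) / (\<beta> - \<alpha>) * (g \<beta> - g \<alpha>)"
proof -
  define c where "c = (g \<beta> - g \<alpha>) / (\<beta> - \<alpha>)"
  define l where "l s = g \<alpha> + (s - \<alpha>) * c" for s
  have mean_l: "((\<lambda>t. l (s + r * cos (2 * pi * t))) has_integral l s) {0..1}" for s r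
  proof -
    have "((\<lambda>t. l s + (r * c) * cos (2 * pi * t)) has_integral l s) {0..1}"
      using has_integral_add[OF has_integral_const_real[of "l s" 0 1]
          has_integral_mult_right[OF has_integral_cos_2pi, of "r * c"]]
      by simp
    thus ?thesis by (simp add: l_def algebra_simps)
  qed
  have mean_gl: "mean_value_at (\<lambda>s. g s - l s) s" "mean_value_at (\<lambda>s. l s - g s) s"
    if "s \<in> {\<alpha><..<\<beta>}" for s
    using mean[OF that] has_integral_diff[OF _ mean_l] has_integral_diff[OF mean_l]
    unfolding mean_value_at_def by blast+
  have cont_l: "continuous_on {\<alpha>..\<beta>} l" unfolding l_def by (intro continuous_intros)
  have "g s - l s \<le> 0"
    by (rule mean_value_at_max_principle[OF continuous_on_diff[OF cont cont_l] _ _ mean_gl(1) s])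
      (use \<open>\<alpha> < \<beta>\<close> in \<open>simp_all add: l_def c_def\<close>)
  moreover have "l s - g s \<le> 0"
    by (rule mean_value_at_max_principle[OF continuous_on_diff[OF cont_l cont] _ _ mean_gl(2) s])
      (use \<open>\<alpha> < \<beta>\<close> in \<open>simp_all add: l_def c_def\<close>)
  ultimately have "g s = l s" by simp
  thus ?thesis by (simp add: l_def c_def)
qed

lemma norm_sum_Basis_components_le:
  fixes w :: "'a::euclidean_space"
  assumes "T \<subseteq> Basis"
  shows "norm (\<Sum>b\<in>T. (w \<bullet> b) *\<^sub>R b) \<le> real DIM('a) * norm w"
proof -
  have "norm (\<Sum>b\<in>T. (w \<bullet> b) *\<^sub>R b) \<le> (\<Sum>b\<in>T. norm ((w \<bullet> b) *\<^sub>R b))" by (rule norm_sum)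
  also have "\<dots> \<le> (\<Sum>b\<in>T. norm w)"
    by (rule sum_mono) (use assms in \<open>auto simp: Basis_le_norm\<close>)
  also have "\<dots> \<le> real DIM('a) * norm w"
    using card_mono[OF finite_Basis assms] by (simp add: mult_right_mono)
  finally show ?thesis .
qed

lemma additive_near_zero_sum:
  fixes \<phi> :: "'a::real_normed_vector \<Rightarrow> real"
  assumes add: "\<And>v w. norm v < \<delta> \<Longrightarrow> norm w < \<delta> \<Longrightarrow> norm (v + w) < \<delta> \<Longrightarrow> \<phi> (v + w) = \<phi> v + \<phi> w"
    and "\<phi> 0 = 0" and "finite S" and small: "\<forall>T\<subseteq>S. norm (\<Sum>i\<in>T. u i) < \<delta>"
  shows "\<phi> (\<Sum>i\<in>S. u i) = (\<Sum>i\<in>S. \<phi> (u i))"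
  using \<open>finite S\<close> small
proof (induction S)
  case empty
  show ?case using \<open>\<phi> 0 = 0\<close> by simp
next
  case (insert c S)
  have "\<phi> (u c + (\<Sum>i\<in>S. u i)) = \<phi> (u c) + \<phi> (\<Sum>i\<in>S. u i)"
    using insert.prems insert.hyps by (intro add) (auto dest: spec[of _ "{c}"] spec[of _ S])
  moreover have "\<phi> (\<Sum>i\<in>S. u i) = (\<Sum>i\<in>S. \<phi> (u i))" using insert.prems by (intro insert.IH) blast
  ultimately show ?case using insert.hyps by simp
qed

lemma additive_homogeneous_near_zero_imp_linear:
  fixes \<phi> :: "'a::euclidean_space \<Rightarrow> real"
  assumes "\<delta> > 0"
    and add: "\<And>v w. norm v < \<delta> \<Longrightarrow> norm w < \<delta> \<Longrightarrow> norm (v + w) < \<delta> \<Longrightarrow> \<phi> (v + w) = \<phi> v + \<phi> w"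
    and hom: "\<And>v t. norm v < \<delta> \<Longrightarrow> \<bar>t\<bar> \<le> 1 \<Longrightarrow> \<phi> (t *\<^sub>R v) = t * \<phi> v"
  shows "\<exists>a \<eta>. \<eta> > 0 \<and> (\<forall>w. norm w < \<eta> \<longrightarrow> \<phi> w = a \<bullet> w)"
proof -
  define \<epsilon> where "\<epsilon> = \<delta> / 2"
  define \<eta> where "\<eta> = \<epsilon> / (real DIM('a) + 1)"
  define a where "a = (\<Sum>b\<in>Basis. (\<phi> (\<epsilon> *\<^sub>R b) / \<epsilon>) *\<^sub>R b)"
  have "\<epsilon> > 0" "\<eta> > 0" using \<open>\<delta> > 0\<close> by (simp_all add: \<epsilon>_def \<eta>_def)
  have "real DIM('a) * \<eta> < \<epsilon>" "\<eta> \<le> \<epsilon>"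
    using \<open>\<eta> > 0\<close> by (simp_all add: \<eta>_def field_simps)
  have "\<phi> w = a \<bullet> w" if w: "norm w < \<eta>" for w
  proof -
    have "\<forall>T\<subseteq>Basis. norm (\<Sum>b\<in>T. (w \<bullet> b) *\<^sub>R b) < \<delta>"
    proof (intro allI impI)
      fix T :: "'a set" assume "T \<subseteq> Basis"
      have "real DIM('a) * norm w \<le> real DIM('a) * \<eta>" using w by (simp add: mult_left_mono)
      thus "norm (\<Sum>b\<in>T. (w \<bullet> b) *\<^sub>R b) < \<delta>" using norm_sum_Basis_components_le[OF \<open>T \<subseteq> Basis\<close>, of w] \<open>real DIM('a) * \<eta> < \<epsilon>\<close>
        using \<open>\<delta> > 0\<close> unfolding \<epsilon>_def by linarith
    qed
    hence "\<phi> w = (\<Sum>b\<in>Basis. \<phi> ((w \<bullet> b) *\<^sub>R b))"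
      using hom[of 0 0] \<open>\<delta> > 0\<close>
      by (subst euclidean_representation[symmetric, of w]) (intro additive_near_zero_sum add; simp)
    also have "\<dots> = (\<Sum>b\<in>Basis. (w \<bullet> b) * (\<phi> (\<epsilon> *\<^sub>R b) / \<epsilon>))"
    proof (rule sum.cong)
      fix b :: 'a assume "b \<in> Basis"
      hence "\<bar>(w \<bullet> b) / \<epsilon>\<bar> \<le> 1"
        using w \<open>\<eta> \<le> \<epsilon>\<close> \<open>\<epsilon> > 0\<close> Basis_le_norm[of b w] by (simp add: abs_div)
      hence "\<phi> (((w \<bullet> b) / \<epsilon>) *\<^sub>R (\<epsilon> *\<^sub>R b)) = ((w \<bullet> b) / \<epsilon>) * \<phi> (\<epsilon> *\<^sub>R b)"
        using \<open>b \<in> Basis\<close> \<open>\<epsilon> > 0\<close> by (intro hom) (simp_all add: \<epsilon>_def)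
      thus "\<phi> ((w \<bullet> b) *\<^sub>R b) = (w \<bullet> b) * (\<phi> (\<epsilon> *\<^sub>R b) / \<epsilon>)" using \<open>\<epsilon> > 0\<close> by simp
    qed simp
    also have "\<dots> = a \<bullet> w"
      unfolding a_def inner_sum_left by (simp add: inner_commute mult.commute)
    finally show ?thesis .
  qed
  thus ?thesis using \<open>\<eta> > 0\<close> by blast
qed

lemma inner_eq_near_zero_imp_eq:
  fixes a a' :: "'a::real_inner"
  assumes "\<eta> > 0" and eq: "\<And>w. norm w < \<eta> \<Longrightarrow> a \<bullet> w = a' \<bullet> w"
  shows "a = a'"
proof -
  define c where "c = \<eta> / (2 * (norm (a - a') + 1))"
  have "c > 0" unfolding c_def using \<open>\<eta> > 0\<close> by (intro divide_pos_pos mult_pos_pos) (auto intro: add_nonneg_pos)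
  have "norm (a - a') / (2 * (norm (a - a') + 1)) < 1" by (simp add: add_nonneg_pos)
  hence "\<eta> * (norm (a - a') / (2 * (norm (a - a') + 1))) < \<eta> * 1"
    using \<open>\<eta> > 0\<close> by (rule mult_strict_left_mono)
  hence "norm (c *\<^sub>R (a - a')) < \<eta>" using \<open>\<eta> > 0\<close> by (simp add: c_def add_nonneg_pos)
  hence "a \<bullet> (c *\<^sub>R (a - a')) = a' \<bullet> (c *\<^sub>R (a - a'))" by (rule eq)
  hence "c * ((a - a') \<bullet> (a - a')) = 0" by (simp add: inner_diff_left)
  thus ?thesis using \<open>c > 0\<close> by simp
qed

locale line_mean_value =
  fixes \<Omega> :: "'a::euclidean_space set" and R :: "'a \<Rightarrow> real"
  assumes open_domain: "open \<Omega>" and continuous: "continuous_on \<Omega> R"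
    and mean_value: "\<And>x a. x \<in> \<Omega> \<Longrightarrow> mean_value_at (\<lambda>s. R (x + s *\<^sub>R a)) 0"
begin

lemma affine_on_segment:
  assumes seg: "closed_segment u v \<subseteq> \<Omega>" and l: "l \<in> {0..1}"
  shows "R (u + l *\<^sub>R (v - u)) = R u + l * (R v - R u)"
proof -
  define g where "g s = R (u + s *\<^sub>R (v - u))" for s
  have in_seg: "u + s *\<^sub>R (v - u) \<in> \<Omega>" if "s \<in> {0..1}" for s
  proof -
    have "u + s *\<^sub>R (v - u) = (1 - s) *\<^sub>R u + s *\<^sub>R v" by (simp add: algebra_simps)
    also have "\<dots> \<in> closed_segment u v" using that by (auto simp: closed_segment_def)
    finally show ?thesis using seg by blast
  qed
  have cont_g: "continuous_on {0..1} g" unfolding g_def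
    by (intro continuous_on_compose2[OF continuous] continuous_intros) (use in_seg in auto)
  have mean_g: "mean_value_at g s" if "s \<in> {0<..<1}" for s
  proof -
    have "mean_value_at (\<lambda>s'. R ((u + s *\<^sub>R (v - u)) + s' *\<^sub>R (v - u))) 0"
      using in_seg that by (intro mean_value) auto
    moreover have "(u + s *\<^sub>R (v - u)) + c *\<^sub>R (v - u) = u + (s + c) *\<^sub>R (v - u)" for c
      by (simp add: algebra_simps)
    ultimately show ?thesis by (simp add: g_def mean_value_at_def)
  qed
  have "g l = g 0 + (l - 0) / (1 - 0) * (g 1 - g 0)"
    by (rule mean_value_at_imp_affine[OF cont_g _ mean_g l]) simp
  thus ?thesis by (simp add: g_def)
qed

lemma affine_on_ball_segment:
  assumes ball: "ball x \<delta> \<subseteq> \<Omega>" and "norm v < \<delta>" "norm w < \<delta>" "l \<in> {0..1}"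
  shows "R (x + ((1 - l) *\<^sub>R v + l *\<^sub>R w)) = R (x + v) + l * (R (x + w) - R (x + v))"
proof -
  have "closed_segment (x + v) (x + w) \<subseteq> ball x \<delta>"
    using assms by (intro closed_segment_subset convex_ball) (auto simp: dist_norm)
  hence "R ((x + v) + l *\<^sub>R ((x + w) - (x + v))) = R (x + v) + l * (R (x + w) - R (x + v))"
    using ball \<open>l \<in> {0..1}\<close> by (intro affine_on_segment) auto
  moreover have "(x + v) + l *\<^sub>R ((x + w) - (x + v)) = x + ((1 - l) *\<^sub>R v + l *\<^sub>R w)"
    by (simp add: algebra_simps)
  ultimately show ?thesis by (simp only:)
qed

lemma increment_homogeneous:
  assumes ball: "ball x \<delta> \<subseteq> \<Omega>" and "norm v < \<delta>" "\<bar>t\<bar> \<le> 1"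
  shows "R (x + t *\<^sub>R v) - R x = t * (R (x + v) - R x)"
proof -
  have "a *\<^sub>R (- v) + b *\<^sub>R v = (b - a) *\<^sub>R v" for a b :: real
    by (simp add: scaleR_diff_left)
  from this[of "1 - (1 + t) / 2" "(1 + t) / 2"]
  have "(1 - (1 + t) / 2) *\<^sub>R (- v) + ((1 + t) / 2) *\<^sub>R v = t *\<^sub>R v" by simp
  moreover have "(1 + t) / 2 \<in> {0..1}" using assms by (auto simp: abs_le_iff)
  ultimately have Rt: "R (x + t *\<^sub>R v) = R (x - v) + (1 + t) / 2 * (R (x + v) - R (x - v))"
    using affine_on_ball_segment[OF ball, of "- v" v "(1 + t) / 2"] assms by simp
  have Rx: "R x = R (x - v) + 1 / 2 * (R (x + v) - R (x - v))"
    using affine_on_ball_segment[OF ball, of "- v" v "1 / 2"] assms by simp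
  show ?thesis unfolding Rx Rt by (simp add: field_simps)
qed

lemma increment_additive:
  assumes ball: "ball x \<delta> \<subseteq> \<Omega>" and "norm v < \<delta>" "norm w < \<delta>" "norm (v + w) < \<delta>"
  shows "R (x + (v + w)) - R x = (R (x + v) - R x) + (R (x + w) - R x)"
proof -
  have "R (x + (1 / 2) *\<^sub>R (v + w)) = R (x + v) + 1 / 2 * (R (x + w) - R (x + v))"
    using affine_on_ball_segment[OF ball, of v w "1 / 2"] assms by (simp add: scaleR_add_right)
  moreover have "R (x + (1 / 2) *\<^sub>R (v + w)) - R x = 1 / 2 * (R (x + (v + w)) - R x)"
    using assms by (intro increment_homogeneous[OF ball]) simp_all
  ultimately show ?thesis by (simp add: field_simps)
qed

lemma locally_linear:
  assumes "x \<in> \<Omega>"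
  shows "\<exists>a. \<exists>\<eta>>0. \<forall>w. norm w < \<eta> \<longrightarrow> R (x + w) = R x + a \<bullet> w"
proof -
  obtain \<delta> where "\<delta> > 0" and ball: "ball x \<delta> \<subseteq> \<Omega>"
    using open_domain assms open_contains_ball by blast
  obtain a \<eta> where "\<eta> > 0" "\<And>w. norm w < \<eta> \<Longrightarrow> R (x + w) - R x = a \<bullet> w"
    using additive_homogeneous_near_zero_imp_linear[of \<delta> "\<lambda>v. R (x + v) - R x"] \<open>\<delta> > 0\<close>
      increment_additive[OF ball] increment_homogeneous[OF ball] by blast
  hence "R (x + w) = R x + a \<bullet> w" if "norm w < \<eta>" for w using that by force
  thus ?thesis using \<open>\<eta> > 0\<close> by blast
qed

definition local_gradient :: "'a \<Rightarrow> 'a" where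
  "local_gradient x = (SOME a. \<exists>\<eta>>0. \<forall>w. norm w < \<eta> \<longrightarrow> R (x + w) = R x + a \<bullet> w)"

lemma local_gradient:
  assumes "x \<in> \<Omega>"
  shows "\<exists>\<eta>>0. \<forall>w. norm w < \<eta> \<longrightarrow> R (x + w) = R x + local_gradient x \<bullet> w"
  unfolding local_gradient_def by (rule someI_ex[OF locally_linear[OF assms]])

lemma local_gradient_eqI:
  assumes "x \<in> \<Omega>" "\<eta> > 0" and lin: "\<And>w. norm w < \<eta> \<Longrightarrow> R (x + w) = R x + a \<bullet> w"
  shows "local_gradient x = a"
proof -
  obtain \<eta>' where "\<eta>' > 0" and lin': "\<And>w. norm w < \<eta>' \<Longrightarrow> R (x + w) = R x + local_gradient x \<bullet> w"
    using local_gradient[OF assms(1)] by blast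
  show ?thesis
  proof (rule inner_eq_near_zero_imp_eq)
    show "min \<eta> \<eta>' > 0" using \<open>\<eta> > 0\<close> \<open>\<eta>' > 0\<close> by simp
    fix w :: 'a assume "norm w < min \<eta> \<eta>'"
    thus "local_gradient x \<bullet> w = a \<bullet> w" using lin[of w] lin'[of w] by simp
  qed
qed

lemma local_gradient_locally_constant:
  assumes "x \<in> \<Omega>"
  obtains \<eta> where "\<eta> > 0" and "\<And>y. y \<in> \<Omega> \<Longrightarrow> dist y x < \<eta> \<Longrightarrow>
    local_gradient y = local_gradient x \<and> R y = R x + local_gradient x \<bullet> (y - x)"
proof -
  obtain \<eta> where "\<eta> > 0" and lin: "\<And>w. norm w < \<eta> \<Longrightarrow> R (x + w) = R x + local_gradient x \<bullet> w"
    using local_gradient[OF assms] by blast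
  have "local_gradient y = local_gradient x \<and> R y = R x + local_gradient x \<bullet> (y - x)"
    if "y \<in> \<Omega>" "dist y x < \<eta>" for y
  proof
    have "norm (y - x) < \<eta>" using that by (simp add: dist_norm)
    thus Ry: "R y = R x + local_gradient x \<bullet> (y - x)" using lin[of "y - x"] by simp
    have "R (y + w) = R y + local_gradient x \<bullet> w" if "norm w < \<eta> - norm (y - x)" for w
    proof -
      have "norm ((y - x) + w) < \<eta>" using that norm_triangle_ineq[of "y - x" w] by simp
      hence "R (x + ((y - x) + w)) = R x + local_gradient x \<bullet> ((y - x) + w)" by (rule lin)
      thus ?thesis unfolding Ry by (simp add: inner_add_right)
    qed
    moreover have "\<eta> - norm (y - x) > 0" using \<open>norm (y - x) < \<eta>\<close> by simp
    ultimately show "local_gradient y = local_gradient x"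
      using \<open>y \<in> \<Omega>\<close> by (intro local_gradient_eqI) auto
  qed
  with \<open>\<eta> > 0\<close> show ?thesis using that by blast
qed

lemma affine_on_components:
  assumes C: "C \<in> components \<Omega>"
  shows "\<exists>a b. \<forall>x\<in>C. R x = a \<bullet> x + b"
proof -
  have "C \<subseteq> \<Omega>" using in_components_subset[OF C] .
  define \<Phi> where "\<Phi> x = (local_gradient x, R x - local_gradient x \<bullet> x)" for x
  have "\<Phi> constant_on C"
  proof (rule locally_constant_imp_constant[OF in_components_connected[OF C]])
    fix x assume "x \<in> C"
    with \<open>C \<subseteq> \<Omega>\<close> obtain \<eta> where "\<eta> > 0" and near: "\<And>y. y \<in> \<Omega> \<Longrightarrow> dist y x < \<eta> \<Longrightarrow>
        local_gradient y = local_gradient x \<and> R y = R x + local_gradient x \<bullet> (y - x)"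
      using local_gradient_locally_constant by blast
    have "\<forall>y\<in>C \<inter> ball x \<eta>. \<Phi> y = \<Phi> x"
      using near \<open>C \<subseteq> \<Omega>\<close> by (auto simp: \<Phi>_def dist_commute inner_diff_right)
    moreover have "openin (top_of_set C) (C \<inter> ball x \<eta>)" by (rule openin_open_Int) simp
    moreover have "x \<in> C \<inter> ball x \<eta>" using \<open>x \<in> C\<close> \<open>\<eta> > 0\<close> by simp
    ultimately show "\<exists>T. openin (top_of_set C) T \<and> x \<in> T \<and> (\<forall>y\<in>T. \<Phi> y = \<Phi> x)" by blast
  qed
  then obtain v where v: "\<And>x. x \<in> C \<Longrightarrow> \<Phi> x = v" unfolding constant_on_def by blast
  have "R x = fst v \<bullet> x + snd v" if "x \<in> C" for x
  proof -
    have "local_gradient x = fst v" "R x - local_gradient x \<bullet> x = snd v"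
      using v[OF that] by (auto simp: \<Phi>_def)
    thus ?thesis by simp
  qed
  thus ?thesis by blast
qed

end

section \<open>The Ronkin function off the singular spine\<close>

lemma continuous_on_poly_fun:
  "poly_fun p \<Longrightarrow> continuous_on S M \<Longrightarrow> continuous_on S (\<lambda>w. p (M w))"
  by (induction rule: poly_fun.induct) (auto intro!: continuous_intros)

lemma holomorphic_on_poly_fun:
  "poly_fun p \<Longrightarrow> (\<And>i j. (\<lambda>w. M w $ i $ j) holomorphic_on S) \<Longrightarrow> (\<lambda>w. p (M w)) holomorphic_on S"
  by (induction rule: poly_fun.induct) (auto intro!: holomorphic_intros)

lemma continuous_on_det [continuous_intros]:
  fixes M :: "_ \<Rightarrow> 'a::real_normed_field^'n^'n"
  shows "continuous_on S M \<Longrightarrow> continuous_on S (\<lambda>w. det (M w))"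
  unfolding det_def by (intro continuous_intros)

lemma holomorphic_on_det:
  fixes M :: "_ \<Rightarrow> complex^'n^'n"
  shows "(\<And>i j. (\<lambda>w. M w $ i $ j) holomorphic_on S) \<Longrightarrow> (\<lambda>w. det (M w)) holomorphic_on S"
  unfolding det_def by (intro holomorphic_intros) auto

definition vec_of_real :: "real^'n \<Rightarrow> complex^'n" where
  "vec_of_real x = (\<chi> i. complex_of_real (x $ i))"

definition vec_Re :: "complex^'n \<Rightarrow> real^'n" where
  "vec_Re z = (\<chi> i. Re (z $ i))"

definition exp_diag_complex :: "complex^'n \<Rightarrow> complex^'n^'n" where
  "exp_diag_complex z = diag_mat (\<lambda>i. exp (z $ i))"

lemma vec_of_real_nth [simp]: "vec_of_real x $ i = complex_of_real (x $ i)"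
  by (simp add: vec_of_real_def)

lemma vec_Re_vec_of_real [simp]: "vec_Re (vec_of_real x) = x"
  by (simp add: vec_Re_def vec_eq_iff)

lemma continuous_on_vec_of_real [continuous_intros]:
  "continuous_on S f \<Longrightarrow> continuous_on S (\<lambda>q. vec_of_real (f q))"
  unfolding vec_of_real_def by (intro continuous_intros)

lemma continuous_on_exp_diag_complex [continuous_intros]:
  assumes "continuous_on S f" shows "continuous_on S (\<lambda>q. exp_diag_complex (f q))"
proof -
  have "continuous_on S (\<lambda>q. if i = j then exp (f q $ i) else 0)" for i j
    by (cases "i = j") (auto intro!: continuous_intros assms)
  thus ?thesis unfolding exp_diag_complex_def diag_mat_def by (auto intro!: continuous_on_vec_lambda)
qed

lemma exp_diag_complex_vec_of_real: "exp_diag_complex (vec_of_real x) = exp_diag x"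
  by (simp add: exp_diag_complex_def exp_diag_eq_diag_mat exp_of_real)

lemma exp_diag_complex_eq_phase_mult:
  "exp_diag_complex z = diag_mat (\<lambda>i. cis (Im (z $ i))) ** exp_diag (vec_Re z)"
  by (simp add: exp_diag_complex_def exp_diag_eq_diag_mat diag_mat_mult vec_Re_def exp_eq_polar mult.commute)

lemma entry_unitary_orbit:
  "(U ** exp_diag_complex z ** cadj V) $ i $ j = (\<Sum>k\<in>UNIV. U $ i $ k * exp (z $ k) * cnj (V $ j $ k))"
  unfolding exp_diag_complex_def matrix_matrix_mult_def diag_mat_def cadj_def
  by (simp add: if_distrib[where f="\<lambda>z. _ * z"] if_distrib[where f="\<lambda>z. z * _"] sum.delta'
      sum_distrib_right cong: if_cong)

lemma det_unitary_orbit_nonzero: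
  "U \<in> unitary_group \<Longrightarrow> V \<in> unitary_group \<Longrightarrow> det (U ** exp_diag_complex z ** cadj V) \<noteq> 0"
  by (simp add: det_mul exp_diag_complex_def det_diag_mat det_unitary_nonzero unitary_group_cadj)

definition quot_eval ::
    "(complex^'n^'n \<Rightarrow> complex) \<Rightarrow> nat \<Rightarrow> complex^'n^'n \<Rightarrow> complex^'n^'n \<Rightarrow> complex^'n \<Rightarrow> complex" where
  "quot_eval p k U V z = p (U ** exp_diag_complex z ** cadj V) / det (U ** exp_diag_complex z ** cadj V) ^ k"

lemma quot_eval_absorb_phase:
  "quot_eval p k U V z = quot_eval p k (U ** diag_mat (\<lambda>i. cis (Im (z $ i)))) V (vec_of_real (vec_Re z))"
  unfolding quot_eval_def exp_diag_complex_vec_of_real exp_diag_complex_eq_phase_mult[of z]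
  by (simp add: matrix_mul_assoc)

lemma phase_in_unitary_group: "diag_mat (\<lambda>i. cis (t i)) \<in> unitary_group"
  by (rule diag_mat_in_unitary_group) simp

lemma continuous_on_quot_eval:
  assumes p: "poly_fun p"
    and cont: "continuous_on S Uf" "continuous_on S Vf" "continuous_on S zf"
    and unitary: "\<And>w. w \<in> S \<Longrightarrow> Uf w \<in> unitary_group \<and> Vf w \<in> unitary_group"
  shows "continuous_on S (\<lambda>w. quot_eval p k (Uf w) (Vf w) (zf w))"
  unfolding quot_eval_def
  by (intro continuous_intros continuous_on_poly_fun[OF p] cont)
    (use unitary det_unitary_orbit_nonzero in auto)

lemma holomorphic_on_quot_eval:
  assumes p: "poly_fun p" and U: "U \<in> unitary_group" and V: "V \<in> unitary_group"
    and hz: "\<And>i. (\<lambda>w. zf w $ i) holomorphic_on S"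
  shows "(\<lambda>w. quot_eval p k U V (zf w)) holomorphic_on S"
proof -
  have entries: "(\<lambda>w. (U ** exp_diag_complex (zf w) ** cadj V) $ i $ j) holomorphic_on S" for i j
    unfolding entry_unitary_orbit by (intro holomorphic_intros hz)
  show ?thesis unfolding quot_eval_def
    by (intro holomorphic_intros holomorphic_on_poly_fun[OF p entries] holomorphic_on_det[OF entries])
      (use U V det_unitary_orbit_nonzero in auto)
qed

lemma borel_measurable_ln_norm_quot_eval:
  assumes p: "poly_fun p"
    and cont: "continuous_on UNIV Uf" "continuous_on UNIV Vf" "continuous_on UNIV zf"
  shows "(\<lambda>q. ln (cmod (quot_eval p k (Uf q) (Vf q) (zf q)))) \<in> borel_measurable borel"
proof -
  have [measurable]: "(\<lambda>q. p (Uf q ** exp_diag_complex (zf q) ** cadj (Vf q))) \<in> borel_measurable borel"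
    "(\<lambda>q. det (Uf q ** exp_diag_complex (zf q) ** cadj (Vf q))) \<in> borel_measurable borel"
    by (intro borel_measurable_continuous_onI continuous_intros continuous_on_poly_fun[OF p] cont)+
  show ?thesis unfolding quot_eval_def by measurable
qed

definition nonvanishing_set :: "(complex^'n^'n \<Rightarrow> complex) \<Rightarrow> nat \<Rightarrow> (real^'n) set" where
  "nonvanishing_set p k =
     {x. \<forall>U\<in>unitary_group. \<forall>V\<in>unitary_group. quot_eval p k U V (vec_of_real x) \<noteq> 0}"

lemma quot_eval_nonzero:
  assumes "U \<in> unitary_group" "V \<in> unitary_group" "vec_Re z \<in> nonvanishing_set p k"
  shows "quot_eval p k U V z \<noteq> 0"
  using assms unitary_group_mult[OF assms(1) phase_in_unitary_group]
  unfolding nonvanishing_set_def by (subst quot_eval_absorb_phase) auto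

lemma open_nonvanishing_set:
  fixes p :: "complex^'n^'n \<Rightarrow> complex"
  assumes p: "poly_fun p"
  shows "open (nonvanishing_set p k)"
proof -
  define K where "K = (unitary_group :: (complex^'n^'n) set) \<times> (unitary_group :: (complex^'n^'n) set)"
  define Z where "Z = {z :: ((complex^'n^'n) \<times> (complex^'n^'n)) \<times> (real^'n).
    p (fst (fst z) ** exp_diag_complex (vec_of_real (snd z)) ** cadj (snd (fst z))) = 0}"
  have "closed Z"
    unfolding Z_def by (intro closed_Collect_eq continuous_on_poly_fun[OF p] continuous_intros)
  hence "closed {x. \<exists>q. q \<in> K \<and> (q, x) \<in> Z}"
    by (intro closed_compact_projection) (simp_all add: K_def compact_Times compact_unitary_group)
  moreover have "- nonvanishing_set p k = {x. \<exists>q. q \<in> K \<and> (q, x) \<in> Z}"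
    using det_unitary_orbit_nonzero by (fastforce simp: nonvanishing_set_def K_def Z_def quot_eval_def)
  ultimately have "closed (- nonvanishing_set p k)" by simp
  thus ?thesis by (simp add: closed_def)
qed

lemma sA_complement_subset_nonvanishing_set:
  fixes f p :: "complex^'n^'n \<Rightarrow> complex"
  assumes f: "\<And>A. det A \<noteq> 0 \<Longrightarrow> f A = p A / det A ^ k"
  shows "UNIV - sA f \<subseteq> nonvanishing_set p k"
proof
  fix x assume x: "x \<in> UNIV - sA f"
  show "x \<in> nonvanishing_set p k" unfolding nonvanishing_set_def
  proof (intro CollectI ballI notI)
    fix U V :: "complex^'n^'n" assume U: "U \<in> unitary_group" and V: "V \<in> unitary_group"
      and zero: "quot_eval p k U V (vec_of_real x) = 0"
    have det: "det (U ** exp_diag x ** cadj V) \<noteq> 0"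
      using det_unitary_orbit_nonzero[OF U V] by (metis exp_diag_complex_vec_of_real)
    have "f (U ** exp_diag x ** cadj V) = 0"
      using zero f[OF det] by (simp add: quot_eval_def exp_diag_complex_vec_of_real)
    hence "x \<in> sA f" unfolding sA_def using det log_singular_vector_unitary_exp_diag[OF U V] by blast
    thus False using x by simp
  qed
qed

lemma integral_indicator_Icc_eq_integral:
  fixes g :: "real \<Rightarrow> real"
  assumes "continuous_on {a..b} g"
  shows "(\<integral>t. indicator {a..b} t * g t \<partial>lborel) = integral {a..b} g"
proof -
  have "set_integrable lborel {a..b} g"
    unfolding set_integrable_def by (rule borel_integrable_compact[OF compact_Icc assms])
  from set_borel_integral_eq_integral(2)[OF this] show ?thesis by (simp add: set_lebesgue_integral_def)
qed

text \<open>The integrand is cut off outside \<open>U(n)\<close>, where the Haar measure lives, to make it bounded.\<close>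
definition log_integrand ::
    "(complex^'n^'n \<Rightarrow> complex) \<Rightarrow> nat \<Rightarrow> complex^'n \<Rightarrow> complex^'n^'n \<Rightarrow> complex^'n^'n \<Rightarrow> real" where
  "log_integrand p k z U V =
     indicator unitary_group U * indicator unitary_group V * ln (cmod (quot_eval p k U V z))"

lemma borel_measurable_log_integrand:
  assumes "poly_fun p" "continuous_on UNIV Uf" "continuous_on UNIV Vf" "continuous_on UNIV zf"
  shows "(\<lambda>q. log_integrand p k (zf q) (Uf q) (Vf q)) \<in> borel_measurable borel"
proof -
  have "(\<lambda>q. indicator unitary_group (Wf q) :: real) \<in> borel_measurable borel"
    if "continuous_on UNIV Wf" for Wf :: "_ \<Rightarrow> complex^'n^'n"
    using measurable_compose[OF borel_measurable_continuous_onI[OF that]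
        borel_measurable_indicator[OF unitary_group_in_borel]] by (simp add: o_def)
  thus ?thesis unfolding log_integrand_def
    using assms by (intro borel_measurable_times borel_measurable_ln_norm_quot_eval) simp_all
qed

lemma log_integrand_bounded:
  fixes p :: "complex^'n^'n \<Rightarrow> complex"
  assumes p: "poly_fun p" and K: "compact K" "vec_Re ` K \<subseteq> nonvanishing_set p k"
  shows "\<exists>B. \<forall>z\<in>K. \<forall>U V. \<bar>log_integrand p k z U V\<bar> \<le> B"
proof -
  let ?L = "(unitary_group :: (complex^'n^'n) set) \<times> (unitary_group :: (complex^'n^'n) set) \<times> K"
  let ?F = "\<lambda>q. quot_eval p k (fst q) (fst (snd q)) (snd (snd q))"
  have "continuous_on ?L ?F" by (rule continuous_on_quot_eval[OF p]) (auto intro!: continuous_intros)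
  moreover have "?F q \<noteq> 0" if "q \<in> ?L" for q
  proof -
    have "vec_Re (snd (snd q)) \<in> nonvanishing_set p k" using that K(2) by auto
    thus ?thesis using that by (intro quot_eval_nonzero) auto
  qed
  ultimately have "continuous_on ?L (\<lambda>q. ln (cmod (?F q)))" by (intro continuous_intros) auto
  hence "bounded ((\<lambda>q. ln (cmod (?F q))) ` ?L)"
    using K(1) by (intro compact_imp_bounded compact_continuous_image compact_Times compact_unitary_group)
  then obtain B where B: "\<forall>y\<in>(\<lambda>q. ln (cmod (?F q))) ` ?L. norm y \<le> B"
    unfolding bounded_iff by blast
  have "\<bar>log_integrand p k z U V\<bar> \<le> max 0 B" if "z \<in> K" for z U V
  proof (cases "U \<in> unitary_group \<and> V \<in> unitary_group")
    case True
    hence "(U, V, z) \<in> ?L" using that by simp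
    hence "\<bar>ln (cmod (?F (U, V, z)))\<bar> \<le> B" using B by auto
    thus ?thesis using True by (simp add: log_integrand_def)
  next
    case False
    thus ?thesis by (auto simp: log_integrand_def)
  qed
  thus ?thesis by blast
qed

lemma log_integrand_uniformly_close:
  fixes p :: "complex^'n^'n \<Rightarrow> complex"
  assumes p: "poly_fun p" and x0: "x0 \<in> nonvanishing_set p k" and "e > 0"
  obtains d where "d > 0" "\<And>x. dist x x0 < d \<Longrightarrow> x \<in> nonvanishing_set p k"
    "\<And>x U V. dist x x0 < d \<Longrightarrow>
       \<bar>log_integrand p k (vec_of_real x) U V - log_integrand p k (vec_of_real x0) U V\<bar> \<le> e"
proof -
  obtain d0 where "d0 > 0" and cball: "cball x0 d0 \<subseteq> nonvanishing_set p k"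
    using open_contains_cball open_nonvanishing_set[OF p] x0 by blast
  define L where "L = (unitary_group :: (complex^'n^'n) set) \<times> (unitary_group :: (complex^'n^'n) set) \<times> cball x0 d0"
  define \<phi> where "\<phi> q = ln (cmod (quot_eval p k (fst q) (fst (snd q)) (vec_of_real (snd (snd q)))))"
    for q :: "(complex^'n^'n) \<times> (complex^'n^'n) \<times> (real^'n)"
  have "continuous_on L (\<lambda>q. quot_eval p k (fst q) (fst (snd q)) (vec_of_real (snd (snd q))))"
    by (rule continuous_on_quot_eval[OF p]) (auto simp: L_def intro!: continuous_intros)
  moreover have "\<forall>q\<in>L. quot_eval p k (fst q) (fst (snd q)) (vec_of_real (snd (snd q))) \<noteq> 0"
    using cball by (auto simp: L_def nonvanishing_set_def)
  ultimately have "continuous_on L \<phi>" unfolding \<phi>_def by (intro continuous_intros) auto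
  hence "uniformly_continuous_on L \<phi>"
    by (intro compact_uniformly_continuous) (simp_all add: L_def compact_Times compact_unitary_group)
  then obtain d where "d > 0" and unif: "\<And>q q'. q \<in> L \<Longrightarrow> q' \<in> L \<Longrightarrow> dist q' q < d \<Longrightarrow> dist (\<phi> q') (\<phi> q) < e"
    unfolding uniformly_continuous_on_def using \<open>e > 0\<close> by metis
  have "\<bar>log_integrand p k (vec_of_real x) U V - log_integrand p k (vec_of_real x0) U V\<bar> \<le> e"
    if "dist x x0 < min d d0" for x U V
  proof (cases "U \<in> unitary_group \<and> V \<in> unitary_group")
    case True
    have "(U, V, x0) \<in> L" "(U, V, x) \<in> L" using True that \<open>d0 > 0\<close> by (auto simp: L_def dist_commute)
    moreover have "dist (U, V, x) (U, V, x0) < d" using that by (simp add: dist_Pair_Pair)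
    ultimately have "dist (\<phi> (U, V, x)) (\<phi> (U, V, x0)) < e" by (intro unif)
    thus ?thesis using True by (simp add: log_integrand_def \<phi>_def dist_real_def)
  qed (use \<open>e > 0\<close> in \<open>auto simp: log_integrand_def\<close>)
  moreover have "x \<in> nonvanishing_set p k" if "dist x x0 < min d d0" for x
    using that cball by (auto simp: dist_commute)
  moreover have "min d d0 > 0" using \<open>d > 0\<close> \<open>d0 > 0\<close> by simp
  ultimately show ?thesis using that by blast
qed

definition complex_line :: "real^'n \<Rightarrow> real^'n \<Rightarrow> complex \<Rightarrow> complex^'n" where
  "complex_line x a w = (\<chi> i. complex_of_real (x $ i) + w * complex_of_real (a $ i))"

lemma vec_Re_complex_line: "vec_Re (complex_line x a w) = x + Re w *\<^sub>R a"
  by (simp add: vec_Re_def complex_line_def vec_eq_iff)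

lemma complex_line_0: "complex_line x a 0 = vec_of_real x"
  by (simp add: complex_line_def vec_of_real_def)

lemma holomorphic_on_complex_line: "(\<lambda>w. complex_line x a w $ i) holomorphic_on S"
  unfolding complex_line_def by (simp, intro holomorphic_intros)

lemma continuous_on_complex_line [continuous_intros]:
  "continuous_on S f \<Longrightarrow> continuous_on S (\<lambda>q. complex_line x a (f q))"
  unfolding complex_line_def by (intro continuous_intros)

lemma circle_mean_log_integrand:
  fixes p :: "complex^'n^'n \<Rightarrow> complex"
  assumes p: "poly_fun p" and r: "0 < r" "r < \<rho>"
    and strip: "\<And>w. \<bar>Re w\<bar> < \<rho> \<Longrightarrow> x + Re w *\<^sub>R a \<in> nonvanishing_set p k"
  shows "(\<integral>t. indicator {0..1} t * log_integrand p k (complex_line x a (circlepath 0 r t)) U V \<partial>lborel)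
      = log_integrand p k (vec_of_real x) U V"
proof (cases "U \<in> unitary_group \<and> V \<in> unitary_group")
  case True
  let ?F = "\<lambda>w. quot_eval p k U V (complex_line x a w)"
  have nonzero: "?F w \<noteq> 0" if "cmod w < \<rho>" for w
    using True strip[of w] abs_Re_le_cmod[of w] that by (intro quot_eval_nonzero) (auto simp: vec_Re_complex_line)
  have "((\<lambda>t. ln (cmod (?F (circlepath 0 r t)))) has_integral ln (cmod (?F 0))) {0..1}"
    using r nonzero
    by (intro has_integral_ln_norm_circlepath[of _ \<rho>] holomorphic_on_quot_eval[OF p True[THEN conjunct1]
          True[THEN conjunct2] holomorphic_on_complex_line]) auto
  moreover have "continuous_on {0..1} (\<lambda>t. ln (cmod (?F (circlepath 0 r t))))"
  proof -
    have "cmod (circlepath 0 r t) < \<rho>" for t using r by (simp add: circlepath norm_mult)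
    thus ?thesis using True nonzero
      by (intro continuous_intros continuous_on_quot_eval[OF p]) (auto simp: circlepath intro!: continuous_intros)
  qed
  ultimately show ?thesis
    using True by (simp add: log_integrand_def integral_indicator_Icc_eq_integral integral_unique complex_line_0)
next
  case False
  thus ?thesis by (auto simp: log_integrand_def)
qed

lemma log_integrand_circle_bounded:
  fixes p :: "complex^'n^'n \<Rightarrow> complex"
  assumes p: "poly_fun p" and r: "0 < r" "r < \<rho>"
    and strip: "\<And>s. \<bar>s\<bar> < \<rho> \<Longrightarrow> x + s *\<^sub>R a \<in> nonvanishing_set p k"
  obtains B where "\<And>U V t. \<bar>indicator {0..1} t * log_integrand p k (complex_line x a (circlepath 0 r t)) U V\<bar>
    \<le> B * indicator {0..1} t"
proof -
  have "x + Re w *\<^sub>R a \<in> nonvanishing_set p k" if "cmod w \<le> r" for w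
    using abs_Re_le_cmod[of w] that r by (intro strip) linarith
  hence "vec_Re ` complex_line x a ` cball 0 r \<subseteq> nonvanishing_set p k"
    by (auto simp: vec_Re_complex_line)
  moreover have "compact (complex_line x a ` cball 0 r)"
    by (intro compact_continuous_image continuous_on_complex_line[OF continuous_on_id] compact_cball)
  ultimately obtain B where B: "\<forall>z\<in>complex_line x a ` cball 0 r. \<forall>U V. \<bar>log_integrand p k z U V\<bar> \<le> B"
    using log_integrand_bounded[OF p] by blast
  have "circlepath 0 r t \<in> cball 0 r" for t using r by (simp add: circlepath norm_mult)
  hence "\<bar>indicator {0..1} t * log_integrand p k (complex_line x a (circlepath 0 r t)) U V\<bar>
      \<le> B * indicator {0..1} t" for U V t
    using B by (cases "t \<in> {0..1}") simp_all
  thus ?thesis using that by blast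
qed

lemma borel_measurable_circle_log_integrand:
  assumes "poly_fun p"
  shows "(\<lambda>q. indicator {0..1} (snd (snd q)) *
      log_integrand p k (complex_line x a (circlepath 0 r (snd (snd q)))) (fst q) (fst (snd q)))
    \<in> borel_measurable (borel :: ((complex^'n^'n) \<times> (complex^'n^'n) \<times> real) measure)"
proof (rule borel_measurable_times)
  show "(\<lambda>q. indicator {0..1} (snd (snd q)) :: real)
      \<in> borel_measurable (borel :: ((complex^'n^'n) \<times> (complex^'n^'n) \<times> real) measure)"
    by (rule measurable_compose[OF _ borel_measurable_indicator[OF atLeastAtMost_borel]])
      (intro borel_measurable_continuous_onI continuous_intros)
  show "(\<lambda>q. log_integrand p k (complex_line x a (circlepath 0 r (snd (snd q)))) (fst q) (fst (snd q)))
      \<in> borel_measurable borel"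
    by (intro borel_measurable_log_integrand assms continuous_intros)
      (auto simp: circlepath intro!: continuous_intros)
qed

lemma open_line_neighbourhood:
  fixes x a :: "'a::real_normed_vector"
  assumes "open S" "x \<in> S"
  obtains \<rho> where "\<rho> > 0" "\<And>s. \<bar>s\<bar> < \<rho> \<Longrightarrow> x + s *\<^sub>R a \<in> S"
proof -
  obtain \<epsilon> where "\<epsilon> > 0" and ball: "ball x \<epsilon> \<subseteq> S" using assms open_contains_ball by blast
  define \<rho> where "\<rho> = \<epsilon> / (norm a + 1)"
  have "x + s *\<^sub>R a \<in> S" if "\<bar>s\<bar> < \<rho>" for s
  proof -
    have "\<bar>s\<bar> * norm a \<le> \<bar>s\<bar> * (norm a + 1)" by (simp add: mult_left_mono)
    also have "\<dots> < \<rho> * (norm a + 1)" using that by (intro mult_strict_right_mono) (auto intro: add_nonneg_pos)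
    also have "\<dots> = \<epsilon>" using add_nonneg_pos[OF norm_ge_zero[of a] zero_less_one] by (simp add: \<rho>_def)
    finally show ?thesis using ball by (auto simp: dist_norm)
  qed
  moreover have "\<rho> > 0" using \<open>\<epsilon> > 0\<close> by (simp add: \<rho>_def add_nonneg_pos)
  ultimately show ?thesis using that by blast
qed

locale ronkin_setting = unitary_haar \<mu> for \<mu> :: "(complex^'n^'n) measure" +
  fixes p :: "complex^'n^'n \<Rightarrow> complex" and k :: nat
  assumes poly: "poly_fun p"
begin

definition ronkin_real :: "real^'n \<Rightarrow> real" where
  "ronkin_real x = double_integral (log_integrand p k (vec_of_real x))"

lemma measurable_log_integrand:
  "(\<lambda>q. log_integrand p k z (fst q) (snd q)) \<in> borel_measurable borel"
  by (intro borel_measurable_log_integrand poly continuous_intros)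

lemma log_integrand_bounded_at:
  assumes "x \<in> nonvanishing_set p k"
  obtains B where "\<And>U V. \<bar>log_integrand p k (vec_of_real x) U V\<bar> \<le> B"
proof -
  have "\<exists>B. \<forall>U V. \<bar>log_integrand p k (vec_of_real x) U V\<bar> \<le> B"
    using log_integrand_bounded[OF poly, of "{vec_of_real x}" k] assms by simp
  thus ?thesis using that by blast
qed

lemma ronkin_eq_ronkin_real:
  assumes f: "\<And>A. det A \<noteq> 0 \<Longrightarrow> f A = p A / det A ^ k" and x: "x \<in> nonvanishing_set p k"
  shows "ronkin \<mu> f x = ereal (ronkin_real x)"
proof -
  obtain B where B: "\<And>U V. \<bar>log_integrand p k (vec_of_real x) U V\<bar> \<le> B"
    using log_integrand_bounded_at[OF x] by blast
  have "eln_abs (f (U ** exp_diag x ** cadj V)) = ereal (log_integrand p k (vec_of_real x) U V)"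
    if U: "U \<in> unitary_group" and V: "V \<in> unitary_group" for U V
  proof -
    have "det (U ** exp_diag x ** cadj V) \<noteq> 0"
      using det_unitary_orbit_nonzero[OF U V] by (metis exp_diag_complex_vec_of_real)
    hence "f (U ** exp_diag x ** cadj V) = quot_eval p k U V (vec_of_real x)"
      using f by (simp add: quot_eval_def exp_diag_complex_vec_of_real)
    moreover have "quot_eval p k U V (vec_of_real x) \<noteq> 0" using x U V by (simp add: quot_eval_nonzero)
    ultimately show ?thesis using U V by (simp add: eln_abs_def log_integrand_def)
  qed
  from ereal_double_integral[OF measurable_log_integrand B this] show ?thesis
    unfolding ronkin_def ronkin_real_def Let_def .
qed

lemma continuous_on_ronkin_real: "continuous_on (nonvanishing_set p k) ronkin_real"
  unfolding continuous_on_iff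
proof (intro ballI allI impI)
  fix x0 and e :: real assume x0: "x0 \<in> nonvanishing_set p k" and "e > 0"
  then obtain d where "d > 0" and close: "\<And>x U V. dist x x0 < d \<Longrightarrow>
      \<bar>log_integrand p k (vec_of_real x) U V - log_integrand p k (vec_of_real x0) U V\<bar> \<le> e / 2"
    using log_integrand_uniformly_close[OF poly x0, of "e / 2"] by (metis half_gt_zero)
  show "\<exists>\<delta>>0. \<forall>x\<in>nonvanishing_set p k. dist x x0 < \<delta> \<longrightarrow> dist (ronkin_real x) (ronkin_real x0) < e"
  proof (intro exI conjI ballI impI)
    fix x assume x: "x \<in> nonvanishing_set p k" and "dist x x0 < d"
    obtain B where B: "\<And>U V. \<bar>log_integrand p k (vec_of_real x) U V\<bar> \<le> B"
      using log_integrand_bounded_at[OF x] by blast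
    obtain B0 where B0: "\<And>U V. \<bar>log_integrand p k (vec_of_real x0) U V\<bar> \<le> B0"
      using log_integrand_bounded_at[OF x0] by blast
    have "\<bar>ronkin_real x - ronkin_real x0\<bar>
        = \<bar>double_integral (\<lambda>U V. log_integrand p k (vec_of_real x) U V - log_integrand p k (vec_of_real x0) U V)\<bar>"
      unfolding ronkin_real_def
      by (subst double_integral_diff[OF measurable_log_integrand B measurable_log_integrand B0]) simp
    also have "\<dots> \<le> e / 2"
      using close[OF \<open>dist x x0 < d\<close>]
      by (intro abs_double_integral_le borel_measurable_diff measurable_log_integrand[simplified])
    finally show "dist (ronkin_real x) (ronkin_real x0) < e" using \<open>e > 0\<close> by (simp add: dist_real_def)
  qed (fact \<open>d > 0\<close>)
qed

lemma double_integral_log_integrand_eq_ronkin_real: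
  "double_integral (log_integrand p k z) = ronkin_real (vec_Re z)"
proof -
  define W where "W = diag_mat (\<lambda>i. cis (Im (z $ i)))"
  have W: "W \<in> unitary_group" unfolding W_def by (rule phase_in_unitary_group)
  have "log_integrand p k z U V = log_integrand p k (vec_of_real (vec_Re z)) (U ** W) V" for U V
    using unitary_group_mult_right_iff[OF W, of U]
    by (simp add: log_integrand_def W_def quot_eval_absorb_phase[of p k U V z] indicator_def)
  hence "double_integral (log_integrand p k z)
      = (\<integral>U. (\<lambda>U. \<integral>V. log_integrand p k (vec_of_real (vec_Re z)) U V \<partial>\<mu>) (U ** W) \<partial>\<mu>)"
    by (simp add: double_integral_def)
  also have "\<dots> = ronkin_real (vec_Re z)"
    unfolding ronkin_real_def double_integral_def
    by (intro integral_mult_right[OF W] borel_measurable_integral_param measurable_log_integrand)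
  finally show ?thesis .
qed

lemma ronkin_real_circle_mean:
  assumes r: "0 < r" "r < \<rho>"
    and strip: "\<And>s. \<bar>s\<bar> < \<rho> \<Longrightarrow> x + s *\<^sub>R a \<in> nonvanishing_set p k"
  shows "ronkin_real x = (\<integral>t. indicator {0..1} t * ronkin_real (x + (r * cos (2 * pi * t)) *\<^sub>R a) \<partial>lborel)"
proof -
  define G where "G U V t = indicator {0..1} t * log_integrand p k (complex_line x a (circlepath 0 r t)) U V"
    for U V t
  obtain B where "\<And>U V t. \<bar>G U V t\<bar> \<le> B * indicator {0..1} t"
    unfolding G_def using log_integrand_circle_bounded[OF poly r strip] by blast
  hence swap: "double_integral (\<lambda>U V. \<integral>t. G U V t \<partial>lborel) = (\<integral>t. double_integral (\<lambda>U V. G U V t) \<partial>lborel)"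
    unfolding G_def by (intro double_integral_lborel_swap borel_measurable_circle_log_integrand poly)
  have circle: "(\<lambda>U V. \<integral>t. G U V t \<partial>lborel) = log_integrand p k (vec_of_real x)"
    unfolding G_def using r strip by (intro ext circle_mean_log_integrand[OF poly, of r \<rho>])
  have phase: "double_integral (\<lambda>U V. G U V t) = indicator {0..1} t * ronkin_real (x + (r * cos (2 * pi * t)) *\<^sub>R a)"
    for t
  proof -
    have "vec_Re (complex_line x a (circlepath 0 r t)) = x + (r * cos (2 * pi * t)) *\<^sub>R a"
      by (simp add: vec_Re_complex_line circlepath Re_exp)
    thus ?thesis
      using double_integral_log_integrand_eq_ronkin_real[of "complex_line x a (circlepath 0 r t)"]
      by (simp add: G_def double_integral_def)
  qed
  show ?thesis by (simp only: ronkin_real_def circle[symmetric] swap phase)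
qed

lemma mean_value_ronkin_real:
  assumes x: "x \<in> nonvanishing_set p k"
  shows "mean_value_at (\<lambda>s. ronkin_real (x + s *\<^sub>R a)) 0"
proof -
  obtain \<rho> where "\<rho> > 0" and strip: "\<And>s. \<bar>s\<bar> < \<rho> \<Longrightarrow> x + s *\<^sub>R a \<in> nonvanishing_set p k"
    using open_line_neighbourhood[OF open_nonvanishing_set[OF poly] x, where a=a] by blast
  have "((\<lambda>t. ronkin_real (x + (r * cos (2 * pi * t)) *\<^sub>R a)) has_integral ronkin_real x) {0..1}"
    if r: "0 < r" "r < \<rho>" for r
  proof -
    let ?R = "\<lambda>t. ronkin_real (x + (r * cos (2 * pi * t)) *\<^sub>R a)"
    have "\<bar>r * cos (2 * pi * t)\<bar> < \<rho>" for t
    proof -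
      have "\<bar>r * cos (2 * pi * t)\<bar> \<le> r * 1" using r by (simp add: abs_mult mult_left_mono)
      thus ?thesis using r by linarith
    qed
    hence "continuous_on {0..1} ?R"
      by (intro continuous_on_compose2[OF continuous_on_ronkin_real] continuous_intros) (auto intro!: strip)
    moreover have "ronkin_real x = integral {0..1} ?R"
      using ronkin_real_circle_mean[OF r strip] integral_indicator_Icc_eq_integral[OF calculation] by simp
    ultimately show ?thesis using integrable_integral[OF integrable_continuous_real] by metis
  qed
  with \<open>\<rho> > 0\<close> show ?thesis unfolding mean_value_at_def by auto
qed

theorem ronkin_real_affine_on_components:
  assumes "C \<in> components (nonvanishing_set p k)"
  shows "\<exists>a b. \<forall>x\<in>C. ronkin_real x = a \<bullet> x + b"
proof -
  interpret line_mean_value "nonvanishing_set p k" ronkin_real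
    by unfold_locales (rule open_nonvanishing_set[OF poly], rule continuous_on_ronkin_real,
        rule mean_value_ronkin_real)
  show ?thesis using affine_on_components[OF assms] .
qed

lemma ronkin_affine_on_components:
  assumes f: "\<And>A. det A \<noteq> 0 \<Longrightarrow> f A = p A / det A ^ k" and C: "C \<in> components (UNIV - sA f)"
  shows "\<exists>a b. \<forall>x\<in>C. ronkin \<mu> f x = ereal (a \<bullet> x + b)"
proof -
  have "C \<subseteq> nonvanishing_set p k"
    using in_components_subset[OF C] sA_complement_subset_nonvanishing_set[OF f] by blast
  moreover have "C \<noteq> {}" using in_components_nonempty[OF C] .
  ultimately obtain C' where "C' \<in> components (nonvanishing_set p k)" and "C \<subseteq> C'"
    using exists_component_superset[OF _ _ in_components_connected[OF C]] by blast
  then obtain a b where "\<forall>x\<in>C'. ronkin_real x = a \<bullet> x + b"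
    using ronkin_real_affine_on_components by blast
  thus ?thesis using ronkin_eq_ronkin_real[OF f] \<open>C \<subseteq> nonvanishing_set p k\<close> \<open>C \<subseteq> C'\<close>
    by (metis subsetD)
qed

end

theorem mainTheorem6:
  fixes f :: "complex^'n^'n \<Rightarrow> complex" and \<mu> :: "(complex^'n^'n) measure"
  assumes "regular_GL f" and "haar_unitary \<mu>"
  shows "(\<forall>C\<in>components (UNIV - sA f). \<exists>a :: real^'n. \<exists>b :: real.
            \<forall>x\<in>C. ronkin \<mu> f x = ereal (a \<bullet> x + b))
       \<and> (UNIV - sA f \<noteq> {} \<longrightarrow> (\<exists>x. ronkin \<mu> f x \<noteq> -\<infinity>))"
proof -
  obtain p k where poly: "poly_fun p" and f: "\<And>A. det A \<noteq> 0 \<Longrightarrow> f A = p A / det A ^ k"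
    using assms(1) unfolding regular_GL_def by blast
  interpret ronkin_setting \<mu> p k
    by unfold_locales (fact assms(2), fact poly)
  have "ronkin \<mu> f x \<noteq> -\<infinity>" if "x \<in> UNIV - sA f" for x
    using ronkin_eq_ronkin_real[OF f] sA_complement_subset_nonvanishing_set[OF f] that by auto
  thus ?thesis using ronkin_affine_on_components[OF f] by blast
qed

end
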